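(* In the LHARG setting with stochastic discount factor and risk-neutral measure $\mathbb{Q}$ as described in the context, assume $\nu_2=\lambda+\tfrac12$, let $Y^*=-\tfrac{\lambda^2}{2}-\nu_1+\tfrac18$ with $1-\theta Y^*>0$, and define the starred parameters $\beta_i^*=\beta_i/(1-\theta Y^* )$, $\alpha_j^*=\alpha_j/(1-\theta Y^* )$, $\theta^*=\theta/(1-\theta Y^* )$, $d^*=d/(1-\theta Y^* )$, $\delta^*=\delta$, $\gamma^*=\gamma+\lambda+\tfrac12$, $\lambda^*=-\tfrac12$. Then the risk-neutral moment generating function $\mathbb{E}^{\mathbb{Q}}[e^{zy_{t,T}}\mid\mathcal{F}_t]$ equals $\exp\big(A_t+\sum_{i=1}^pB_{t,i}\mathrm{RV}_{t+1-i}+\sum_{j=1}^qC_{t,j}\ell^*_{t+1-j}\big)$, where $A,B,C$ are given by the following recursion with the starred parameters: terminal conditions $A_T=B_{T,i}=C_{T,j}=0$, and for $s=T-1,\dots,t$, $$X_{s+1}=z\lambda^*+B_{s+1,1}+\frac{\tfrac12z^2+(\gamma^* )^2C_{s+1,1}-2C_{s+1,1}\gamma^*z}{1-2C_{s+1,1}},$$ $$A_s=A_{s+1}+zr-\tfrac12\ln(1-2C_{s+1,1})-\delta^*w(X_{s+1},\theta^* )+d^*v(X_{s+1},\theta^* ),$$ $$B_{s,i}=B_{s+1,i+1}\mathbf{1}_{\{i\le p-1\}}+v(X_{s+1},\theta^* )\beta^*_i,\qquad C_{s,j}=C_{s+1,j+1}\mathbf{1}_{\{j\le q-1\}}+v(X_{s+1},\theta^*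 )\alpha^*_j,$$ and $\ell^*_u=(\epsilon^*_u-\gamma^*\sqrt{\mathrm{RV}_u})^2$ with $\epsilon^*_u=\epsilon_u+(\lambda+\tfrac12)\sqrt{\mathrm{RV}_u}$ (so that $\ell^*_u=\ell_u$), whenever $1-2C_{s+1,1}>0$ and $\theta^*X_{s+1}<1$ for all $s$.
   Context: LHARG setting. Discrete time. $(\epsilon_t)$ are i.i.d. $\mathcal{N}(0,1)$ under $\mathbb{P}$ and $(\mathrm{RV}_t)$ is a positive process (realized variance); $\mathcal{F}_t$ is the $\sigma$-algebra generated by $\{\epsilon_u,\mathrm{RV}_u:u\le t\}$. Parameters: $r\in\mathbb{R}$ (risk-free rate), $\lambda\in\mathbb{R}$, $\delta>0$, $\theta>0$, $d\ge0$, $\gamma\in\mathbb{R}$, integers $p,q\ge1$, $\beta_1,\dots,\beta_p\ge0$, $\alpha_1,\dots,\alpha_q\ge0$. Leverage: $\ell_t=(\epsilon_t-\gamma\sqrt{\mathrm{RV}_t})^2$. Log-returns: $y_{t+1}=\ln(S_{t+1}/S_t)=r+\lambda\mathrm{RV}_{t+1}+\sqrt{\mathrm{RV}_{t+1}}\,\epsilon_{t+1}$, with $\epsilon_{t+1}$ independent of $(\mathcal{F}_t,\mathrm{RV}_{t+1})$; $y_{t,T}=\sum_{s=t+1}^Ty_s$. Conditionally on $\mathcal{F}_t$, $\mathrm{RV}_{t+1}$ has the noncentral gamma law $\bar\gamma(\delta,\Theta_t,\theta)$ with $\Theta_t=d+\sum_{i=1}^p\beta_i\mathrm{RV}_{t+1-i}+\sum_{j=1}^q\alpha_j\ell_{t+1-j}$.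 Here $\bar\gamma(\delta,\Theta,\theta)$ (shape $\delta$, noncentrality $\Theta\ge0$, scale $\theta$) is the law of $\theta G$ where, conditionally on $N\sim\mathrm{Poisson}(\Theta)$, $G\sim\mathrm{Gamma}(\delta+N,1)$; for $X\sim\bar\gamma(\delta,\Theta,\theta)$ and $\theta x<1$, $\mathbb{E}[e^{xX}]=\exp(-\delta w(x,\theta)+\Theta v(x,\theta))$, where $v(x,\theta)=\frac{\theta x}{1-\theta x}$ and $w(x,\theta)=\ln(1-\theta x)$. Stochastic discount factor: $M_{s,s+1}=e^{-\nu_1\mathrm{RV}_{s+1}-\nu_2y_{s+1}}/\mathbb{E}^{\mathbb{P}}[e^{-\nu_1\mathrm{RV}_{s+1}-\nu_2y_{s+1}}\mid\mathcal{F}_s]$; the measure $\mathbb{Q}$ is defined by $\mathbb{E}^{\mathbb{Q}}[X\mid\mathcal{F}_t]=\mathbb{E}^{\mathbb{P}}[M_{t,t+1}\cdots M_{T-1,T}X\mid\mathcal{F}_t]$ for $\mathcal{F}_T$-measurable $X$. *)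

theory Defs
  imports "HOL-Probability.Probability"
begin

definition gamma_density :: "real \<Rightarrow> real \<Rightarrow> real" where
  "gamma_density k x = (if x > 0 then x powr (k - 1) * exp (- x) / Gamma k else 0)"

definition gamma_measure :: "real \<Rightarrow> real measure" where
  "gamma_measure k = density lborel (\<lambda>x. ennreal (gamma_density k x))"

text \<open>Probability that a noncentral gamma variable with shape delta, noncentrality Theta and
  scale theta lies in B: law of theta*G where, given N ~ Poisson(Theta), G ~ Gamma(delta+N,1).\<close>
definition ncgamma_prob :: "real \<Rightarrow> real \<Rightarrow> real \<Rightarrow> real set \<Rightarrow> real" where
  "ncgamma_prob \<delta> \<Theta> \<theta> B =
     (\<Sum>n. exp (- \<Theta>) * \<Theta> ^ n / fact n * measure (gamma_measure (\<delta> + real n)) {g. \<theta> * g \<in> B})"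

definition vfun :: "real \<Rightarrow> real \<Rightarrow> real" where
  "vfun x \<theta> = \<theta> * x / (1 - \<theta> * x)"

definition wfun :: "real \<Rightarrow> real \<Rightarrow> real" where
  "wfun x \<theta> = ln (1 - \<theta> * x)"

definition filt :: "'a measure \<Rightarrow> (int \<Rightarrow> 'a \<Rightarrow> real) \<Rightarrow> (int \<Rightarrow> 'a \<Rightarrow> real) \<Rightarrow> int \<Rightarrow> 'a measure" where
  "filt M eps RV t = sigma (space M)
     {A. \<exists>u B. u \<le> t \<and> B \<in> sets borel \<and> (A = eps u -` B \<inter> space M \<or> A = RV u -` B \<inter> space M)}"

definition filt_plus :: "'a measure \<Rightarrow> (int \<Rightarrow> 'a \<Rightarrow> real) \<Rightarrow> (int \<Rightarrow> 'a \<Rightarrow> real) \<Rightarrow> int \<Rightarrow> 'a measure" where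
  "filt_plus M eps RV t = sigma (space M)
     (sets (filt M eps RV t) \<union> {RV (t + 1) -` B \<inter> space M | B. B \<in> sets borel})"

definition logret :: "real \<Rightarrow> real \<Rightarrow> (int \<Rightarrow> 'a \<Rightarrow> real) \<Rightarrow> (int \<Rightarrow> 'a \<Rightarrow> real) \<Rightarrow> int \<Rightarrow> 'a \<Rightarrow> real" where
  "logret r lm eps RV s \<omega> = r + lm * RV s \<omega> + sqrt (RV s \<omega>) * eps s \<omega>"

definition logret_sum :: "real \<Rightarrow> real \<Rightarrow> (int \<Rightarrow> 'a \<Rightarrow> real) \<Rightarrow> (int \<Rightarrow> 'a \<Rightarrow> real) \<Rightarrow> int \<Rightarrow> int \<Rightarrow> 'a \<Rightarrow> real" where
  "logret_sum r lm eps RV t T \<omega> = (\<Sum>s\<in>{t+1..T}. logret r lm eps RV s \<omega>)"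

definition lev :: "real \<Rightarrow> (int \<Rightarrow> 'a \<Rightarrow> real) \<Rightarrow> (int \<Rightarrow> 'a \<Rightarrow> real) \<Rightarrow> int \<Rightarrow> 'a \<Rightarrow> real" where
  "lev \<gamma> eps RV u \<omega> = (eps u \<omega> - \<gamma> * sqrt (RV u \<omega>))\<^sup>2"

definition Theta :: "real \<Rightarrow> nat \<Rightarrow> nat \<Rightarrow> (nat \<Rightarrow> real) \<Rightarrow> (nat \<Rightarrow> real) \<Rightarrow> real
     \<Rightarrow> (int \<Rightarrow> 'a \<Rightarrow> real) \<Rightarrow> (int \<Rightarrow> 'a \<Rightarrow> real) \<Rightarrow> int \<Rightarrow> 'a \<Rightarrow> real" where
  "Theta d p q \<beta> \<alpha> \<gamma> eps RV t \<omega> =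
     d + (\<Sum>i=1..p. \<beta> i * RV (t + 1 - int i) \<omega>) + (\<Sum>j=1..q. \<alpha> j * lev \<gamma> eps RV (t + 1 - int j) \<omega>)"

definition sdf :: "'a measure \<Rightarrow> real \<Rightarrow> real \<Rightarrow> real \<Rightarrow> real \<Rightarrow> (int \<Rightarrow> 'a \<Rightarrow> real) \<Rightarrow> (int \<Rightarrow> 'a \<Rightarrow> real)
     \<Rightarrow> int \<Rightarrow> 'a \<Rightarrow> real" where
  "sdf M r lm \<nu>1 \<nu>2 eps RV s \<omega> =
     exp (- \<nu>1 * RV (s + 1) \<omega> - \<nu>2 * logret r lm eps RV (s + 1) \<omega>) /
     real_cond_exp M (filt M eps RV s)
       (\<lambda>\<omega>'. exp (- \<nu>1 * RV (s + 1) \<omega>' - \<nu>2 * logret r lm eps RV (s + 1) \<omega>')) \<omega>"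

definition Q_cond_exp :: "'a measure \<Rightarrow> real \<Rightarrow> real \<Rightarrow> real \<Rightarrow> real \<Rightarrow> (int \<Rightarrow> 'a \<Rightarrow> real) \<Rightarrow> (int \<Rightarrow> 'a \<Rightarrow> real)
     \<Rightarrow> int \<Rightarrow> int \<Rightarrow> ('a \<Rightarrow> real) \<Rightarrow> 'a \<Rightarrow> real" where
  "Q_cond_exp M r lm \<nu>1 \<nu>2 eps RV t T X =
     real_cond_exp M (filt M eps RV t)
       (\<lambda>\<omega>. (\<Prod>s\<in>{t..<T}. sdf M r lm \<nu>1 \<nu>2 eps RV s \<omega>) * X \<omega>)"

text \<open>coef ... k gives (A_s, B_{s,.}, C_{s,.}) for s = T - k.\<close>
fun coef :: "real \<Rightarrow> real \<Rightarrow> real \<Rightarrow> real \<Rightarrow> real \<Rightarrow> real \<Rightarrow> nat \<Rightarrow> nat \<Rightarrow> (nat \<Rightarrow> real) \<Rightarrow> (nat \<Rightarrow> real)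
     \<Rightarrow> real \<Rightarrow> nat \<Rightarrow> real \<times> (nat \<Rightarrow> real) \<times> (nat \<Rightarrow> real)" where
  "coef r lm \<delta> \<theta> d \<gamma> p q \<beta> \<alpha> z 0 = (0, (\<lambda>_. 0), (\<lambda>_. 0))"
| "coef r lm \<delta> \<theta> d \<gamma> p q \<beta> \<alpha> z (Suc k) =
     (let (A', B', C') = coef r lm \<delta> \<theta> d \<gamma> p q \<beta> \<alpha> z k;
          X = z * lm + B' 1 + (z\<^sup>2 / 2 + \<gamma>\<^sup>2 * C' 1 - 2 * C' 1 * \<gamma> * z) / (1 - 2 * C' 1)
      in (A' + z * r - ln (1 - 2 * C' 1) / 2 - \<delta> * wfun X \<theta> + d * vfun X \<theta>,
          (\<lambda>i. (if i \<le> p - 1 then B' (i + 1) else 0) + vfun X \<theta> * \<beta> i),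
          (\<lambda>j. (if j \<le> q - 1 then C' (j + 1) else 0) + vfun X \<theta> * \<alpha> j)))"

text \<open>X_{s+1} for s = T - (k+1), computed from the time-(s+1) coefficients coef ... k.\<close>
definition Xcoef :: "real \<Rightarrow> real \<Rightarrow> real \<Rightarrow> real \<Rightarrow> real \<Rightarrow> real \<Rightarrow> nat \<Rightarrow> nat \<Rightarrow> (nat \<Rightarrow> real) \<Rightarrow> (nat \<Rightarrow> real)
     \<Rightarrow> real \<Rightarrow> nat \<Rightarrow> real" where
  "Xcoef r lm \<delta> \<theta> d \<gamma> p q \<beta> \<alpha> z k =
     (let (A', B', C') = coef r lm \<delta> \<theta> d \<gamma> p q \<beta> \<alpha> z k
      in z * lm + B' 1 + (z\<^sup>2 / 2 + \<gamma>\<^sup>2 * C' 1 - 2 * C' 1 * \<gamma> * z) / (1 - 2 * C' 1))"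

end

theory Submission
  imports Defs
begin

(* Under Q the conditional expectation E^Q[exp(z y_{t,T}) | F_t] is E^P of the product of the
   one-period discount factors M_{s,s+1} times exp(z y_{t,T}).  Each factor is computed explicitly:
   given F_s, integrating out the Gaussian shock eps_{s+1} (independent of sigma(F_s, RV_{s+1}))
   turns an exponential-quadratic function of (RV_{s+1}, eps_{s+1}) into exp(mu RV_{s+1}), and the
   noncentral gamma law of RV_{s+1} then yields exp(-delta w(mu,theta) + Theta_s v(mu,theta)).
   With nu2 = lambda + 1/2 and Y' = -lambda^2/2 - nu1 + 1/8 the resulting exponent is
   Y' + X_{s+1}; the identity 1 - theta (Y' + X) = (1 - theta Y') (1 - theta' X), where
   theta' = theta / (1 - theta Y') is the starred scale, converts w and v at scale theta into w and
   v at scale theta', so that the denominators of the discount factors cancel and the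
   starred coefficient recursion appears.  A backward induction over the periods t, ..., T-1 then
   identifies the conditional expectation with the exponential-affine value. *)

section \<open>The gamma and noncentral gamma laws\<close>

lemma gamma_density_nonneg: "k > 0 \<Longrightarrow> 0 \<le> gamma_density k x"
  unfolding gamma_density_def by (auto intro!: divide_nonneg_pos Gamma_real_pos)

lemma gamma_density_measurable[measurable]: "gamma_density k \<in> borel_measurable borel"
  unfolding gamma_density_def by measurable

text \<open>The Gamma(k,1) density integrates to one (Euler's integral for \<open>\<Gamma>(k)\<close>).\<close>
lemma gamma_density_integral:
  assumes k: "k > 0"
  shows "(\<integral>\<^sup>+ x. ennreal (gamma_density k x) \<partial>lborel) = 1"
proof -
  have "((\<lambda>t. t powr (k - 1) / exp t) has_integral Gamma k) {0..}"
    using Gamma_integral_real[OF k] .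
  hence "((\<lambda>t. if t \<in> {0..} then t powr (k - 1) / exp t else 0) has_integral Gamma k) UNIV"
    by (subst has_integral_restrict_UNIV)
  hence "((\<lambda>t. (if t \<in> {0..} then t powr (k - 1) / exp t else 0) / Gamma k)
            has_integral Gamma k / Gamma k) UNIV"
    by (rule has_integral_divide)
  moreover have "(\<lambda>t. (if t \<in> {0..} then t powr (k - 1) / exp t else 0) / Gamma k) = gamma_density k"
    by (auto simp: gamma_density_def fun_eq_iff exp_minus field_simps)
  moreover have "Gamma k \<noteq> 0" using Gamma_real_pos[OF k] by simp
  ultimately have "(gamma_density k has_integral 1) UNIV" by simp
  thus ?thesis
    by (subst nn_integral_has_integral_lborel[where I=1]) (auto simp: gamma_density_nonneg k)
qed

lemma prob_space_gamma_measure: "k > 0 \<Longrightarrow> prob_space (gamma_measure k)"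
  unfolding gamma_measure_def
  by (rule prob_spaceI) (simp add: emeasure_density gamma_density_integral)

lemma gamma_density_tilt:
  assumes c: "c < 1"
  shows "gamma_density k x * exp (c * x) = (1 - c) powr (1 - k) * gamma_density k ((1 - c) * x)"
proof (cases "x > 0")
  case True
  define L where "L = 1 - c"
  have L: "L > 0" using c by (simp add: L_def)
  have "(L * x) powr (k - 1) = L powr (k - 1) * x powr (k - 1)"
    using True L by (simp add: powr_mult)
  moreover have "L powr (1 - k) * L powr (k - 1) = 1"
    using L by (simp add: powr_add[symmetric])
  moreover have "exp (- x) * exp (c * x) = exp (- (L * x))"
    by (simp add: L_def exp_add[symmetric] algebra_simps)
  ultimately show ?thesis using True L
    unfolding gamma_density_def L_def[symmetric] by (simp add: field_simps)
next
  case False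
  thus ?thesis using c unfolding gamma_density_def by (simp add: zero_less_mult_iff)
qed

lemma gamma_measure_mgf:
  assumes k: "k > 0" and c: "c < 1"
  shows "(\<integral>\<^sup>+ x. ennreal (exp (c * x)) \<partial>gamma_measure k) = ennreal ((1 - c) powr (- k))"
proof -
  define L where "L = 1 - c"
  have L: "L > 0" using c by (simp add: L_def)
  have "(\<integral>\<^sup>+ x. ennreal (gamma_density k x) \<partial>lborel)
      = ennreal \<bar>L\<bar> * (\<integral>\<^sup>+ x. ennreal (gamma_density k (0 + L * x)) \<partial>lborel)"
    by (rule nn_integral_real_affine) (use L in auto)
  hence "ennreal (1 / L) * (ennreal L * (\<integral>\<^sup>+ x. ennreal (gamma_density k (L * x)) \<partial>lborel))
        = ennreal (1 / L)"
    using gamma_density_integral[OF k] L by simp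
  moreover have "ennreal (1 / L) * ennreal L = 1"
    using L by (simp add: ennreal_mult'[symmetric])
  ultimately have scaled: "(\<integral>\<^sup>+ x. ennreal (gamma_density k (L * x)) \<partial>lborel) = ennreal (1 / L)"
    by (simp add: mult.assoc[symmetric])
  have "(\<integral>\<^sup>+ x. ennreal (exp (c * x)) \<partial>gamma_measure k)
      = (\<integral>\<^sup>+ x. ennreal (gamma_density k x * exp (c * x)) \<partial>lborel)"
    unfolding gamma_measure_def
    by (subst nn_integral_density) (auto simp: ennreal_mult gamma_density_nonneg k)
  also have "\<dots> = (\<integral>\<^sup>+ x. ennreal (L powr (1 - k)) * ennreal (gamma_density k (L * x)) \<partial>lborel)"
    by (simp add: gamma_density_tilt[OF c] L_def[symmetric] ennreal_mult gamma_density_nonneg k)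
  also have "\<dots> = ennreal (L powr (1 - k)) * ennreal (1 / L)"
    by (subst nn_integral_cmult) (auto simp: scaled)
  also have "\<dots> = ennreal ((1 - c) powr (- k))"
    using L by (simp add: ennreal_mult'[symmetric] L_def[symmetric] powr_diff powr_minus divide_simps)
  finally show ?thesis .
qed

definition poisson_weight :: "real \<Rightarrow> nat \<Rightarrow> real" where
  "poisson_weight \<Theta> n = exp (- \<Theta>) * \<Theta> ^ n / fact n"

definition ncg_integral :: "real \<Rightarrow> real \<Rightarrow> (real \<Rightarrow> ennreal) \<Rightarrow> real \<Rightarrow> ennreal" where
  "ncg_integral \<delta> \<theta> h \<Theta> =
     (\<Sum>n. ennreal (poisson_weight \<Theta> n) * (\<integral>\<^sup>+ g. h (\<theta> * g) \<partial>gamma_measure (\<delta> + real n)))"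

lemma poisson_weight_nonneg: "\<Theta> \<ge> 0 \<Longrightarrow> poisson_weight \<Theta> n \<ge> 0"
  unfolding poisson_weight_def by simp

lemma poisson_weight_measurable[measurable]: "(\<lambda>x. poisson_weight x n) \<in> borel_measurable borel"
  unfolding poisson_weight_def by measurable

lemma ncg_integral_measurable[measurable]: "ncg_integral \<delta> \<theta> h \<in> borel_measurable borel"
  unfolding ncg_integral_def by measurable

lemma poisson_weight_sums: "(\<lambda>n. poisson_weight \<Theta> n * x ^ n) sums (exp (- \<Theta>) * exp (\<Theta> * x))"
proof -
  have "(\<lambda>n. (\<Theta> * x) ^ n /\<^sub>R fact n) sums exp (\<Theta> * x)" by (rule exp_converges)
  hence "(\<lambda>n. exp (- \<Theta>) * ((\<Theta> * x) ^ n /\<^sub>R fact n)) sums (exp (- \<Theta>) * exp (\<Theta> * x))"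
    by (rule sums_mult)
  thus ?thesis by (simp add: poisson_weight_def power_mult_distrib field_simps)
qed

lemma ncg_integral_exp:
  assumes \<delta>: "\<delta> > 0" and \<theta>: "\<theta> > 0" and \<Theta>: "\<Theta> \<ge> 0" and m: "\<theta> * \<mu> < 1"
  shows "ncg_integral \<delta> \<theta> (\<lambda>x. ennreal (exp (\<mu> * x))) \<Theta>
       = ennreal (exp (- \<delta> * wfun \<mu> \<theta> + \<Theta> * vfun \<mu> \<theta>))"
proof -
  define L where "L = 1 - \<theta> * \<mu>"
  have L: "L > 0" using m by (simp add: L_def)
  have summand: "ennreal (poisson_weight \<Theta> n) * (\<integral>\<^sup>+ g. ennreal (exp (\<mu> * (\<theta> * g))) \<partial>gamma_measure (\<delta> + real n))
      = ennreal (L powr (- \<delta>) * (poisson_weight \<Theta> n * (1 / L) ^ n))" for n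
  proof -
    have "(\<integral>\<^sup>+ g. ennreal (exp (\<mu> * (\<theta> * g))) \<partial>gamma_measure (\<delta> + real n))
        = (\<integral>\<^sup>+ g. ennreal (exp ((\<theta> * \<mu>) * g)) \<partial>gamma_measure (\<delta> + real n))"
      by (simp add: mult_ac)
    also have "\<dots> = ennreal (L powr (- (\<delta> + real n)))"
      unfolding L_def using \<delta> m by (intro gamma_measure_mgf) auto
    also have "L powr (- (\<delta> + real n)) = L powr (- \<delta>) * L powr (- real n)"
      by (simp add: powr_add[symmetric])
    also have "L powr (- real n) = (1 / L) ^ n"
      using L by (simp add: powr_minus powr_realpow power_one_over divide_inverse power_inverse)
    finally show ?thesis
      using poisson_weight_nonneg[OF \<Theta>] L by (simp add: ennreal_mult[symmetric] mult_ac)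
  qed
  have S: "(\<lambda>n. L powr (- \<delta>) * (poisson_weight \<Theta> n * (1 / L) ^ n))
             sums (L powr (- \<delta>) * (exp (- \<Theta>) * exp (\<Theta> * (1 / L))))"
    by (intro sums_mult poisson_weight_sums)
  have "ncg_integral \<delta> \<theta> (\<lambda>x. ennreal (exp (\<mu> * x))) \<Theta>
      = (\<Sum>n. ennreal (L powr (- \<delta>) * (poisson_weight \<Theta> n * (1 / L) ^ n)))"
    unfolding ncg_integral_def by (simp add: summand)
  also have "\<dots> = ennreal (L powr (- \<delta>) * (exp (- \<Theta>) * exp (\<Theta> * (1 / L))))"
    using S poisson_weight_nonneg[OF \<Theta>] L sums_summable[OF poisson_weight_sums[of \<Theta> "1 / L"]]
    by (subst suminf_ennreal2) (auto simp: sums_unique[symmetric] sums_summable)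
  also have "L powr (- \<delta>) * (exp (- \<Theta>) * exp (\<Theta> * (1 / L)))
      = exp (- \<delta> * wfun \<mu> \<theta> + \<Theta> * vfun \<mu> \<theta>)"
  proof -
    have "L powr (- \<delta>) = exp (- \<delta> * ln L)" using L by (simp add: powr_def)
    moreover have "- \<Theta> + \<Theta> * (1 / L) = \<Theta> * (\<theta> * \<mu> / L)"
      using L by (simp add: L_def field_simps)
    ultimately show ?thesis
      by (simp add: wfun_def vfun_def L_def[symmetric] exp_add[symmetric] algebra_simps)
         (simp add: L_def field_simps)
  qed
  finally show ?thesis .
qed

text \<open>The series defining \<open>ncgamma_prob\<close> converges: its terms are dominated by the Poisson weights.\<close>
lemma ncgamma_prob_summable:
  assumes \<delta>: "\<delta> > 0" and \<Theta>: "\<Theta> \<ge> 0"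
  shows "summable (\<lambda>n. poisson_weight \<Theta> n * measure (gamma_measure (\<delta> + real n)) {g. \<theta> * g \<in> B})"
proof (rule summable_comparison_test)
  have "measure (gamma_measure (\<delta> + real n)) {g. \<theta> * g \<in> B} \<le> 1" for n
    using \<delta> by (intro prob_space.prob_le_1 prob_space_gamma_measure) auto
  thus "\<exists>N. \<forall>n\<ge>N. norm (poisson_weight \<Theta> n * measure (gamma_measure (\<delta> + real n)) {g. \<theta> * g \<in> B})
          \<le> poisson_weight \<Theta> n * 1 ^ n"
    using poisson_weight_nonneg[OF \<Theta>] by (auto intro!: mult_left_le)
  show "summable (\<lambda>n. poisson_weight \<Theta> n * 1 ^ n)"
    using poisson_weight_sums by (rule sums_summable)
qed

lemma ncgamma_prob_nonneg:
  assumes \<delta>: "\<delta> > 0" and \<Theta>: "\<Theta> \<ge> 0"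
  shows "ncgamma_prob \<delta> \<Theta> \<theta> B \<ge> 0"
proof -
  have "0 \<le> (\<Sum>n. poisson_weight \<Theta> n * measure (gamma_measure (\<delta> + real n)) {g. \<theta> * g \<in> B})"
    using ncgamma_prob_summable[OF \<delta> \<Theta>] poisson_weight_nonneg[OF \<Theta>] by (intro suminf_nonneg) auto
  thus ?thesis unfolding ncgamma_prob_def poisson_weight_def by (simp add: mult_ac)
qed

lemma ncg_integral_indicator:
  assumes \<delta>: "\<delta> > 0" and \<Theta>: "\<Theta> \<ge> 0" and B: "B \<in> sets borel"
  shows "ncg_integral \<delta> \<theta> (indicator B) \<Theta> = ennreal (ncgamma_prob \<delta> \<Theta> \<theta> B)"
proof -
  have summand: "(\<integral>\<^sup>+ g. indicator B (\<theta> * g) \<partial>gamma_measure (\<delta> + real n))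
      = ennreal (measure (gamma_measure (\<delta> + real n)) {g. \<theta> * g \<in> B})" for n
  proof -
    interpret prob_space "gamma_measure (\<delta> + real n)"
      using \<delta> by (intro prob_space_gamma_measure) auto
    have "{g. \<theta> * g \<in> B} \<in> sets (gamma_measure (\<delta> + real n))"
      using B unfolding gamma_measure_def by (simp, measurable)
    moreover have "(\<integral>\<^sup>+ g. indicator B (\<theta> * g) \<partial>gamma_measure (\<delta> + real n))
        = (\<integral>\<^sup>+ g. indicator {g. \<theta> * g \<in> B} g \<partial>gamma_measure (\<delta> + real n))"
      by (intro nn_integral_cong) (auto simp: indicator_def)
    ultimately show ?thesis by (simp add: emeasure_eq_measure)
  qed
  have "ncg_integral \<delta> \<theta> (indicator B) \<Theta>
      = (\<Sum>n. ennreal (poisson_weight \<Theta> n * measure (gamma_measure (\<delta> + real n)) {g. \<theta> * g \<in> B}))"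
    unfolding ncg_integral_def summand using poisson_weight_nonneg[OF \<Theta>] by (simp add: ennreal_mult)
  also have "\<dots> = ennreal (\<Sum>n. poisson_weight \<Theta> n * measure (gamma_measure (\<delta> + real n)) {g. \<theta> * g \<in> B})"
    using ncgamma_prob_summable[OF \<delta> \<Theta>] poisson_weight_nonneg[OF \<Theta>] by (intro suminf_ennreal2) auto
  finally show ?thesis unfolding ncgamma_prob_def poisson_weight_def by (simp add: mult_ac)
qed

lemma ncg_integral_mono:
  assumes "\<And>x. h1 x \<le> h2 x"
  shows "ncg_integral \<delta> \<theta> h1 \<Theta> \<le> ncg_integral \<delta> \<theta> h2 \<Theta>"
  unfolding ncg_integral_def using assms
  by (intro suminf_le mult_left_mono nn_integral_mono) auto

text \<open>The noncentral gamma law has total mass one, so it gives every set probability at most one.\<close>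
lemma ncg_integral_indicator_le_1:
  assumes \<delta>: "\<delta> > 0" and \<theta>: "\<theta> > 0" and \<Theta>: "\<Theta> \<ge> 0"
  shows "ncg_integral \<delta> \<theta> (indicator B) \<Theta> \<le> 1"
proof -
  have "ncg_integral \<delta> \<theta> (indicator B) \<Theta> \<le> ncg_integral \<delta> \<theta> (\<lambda>x. ennreal (exp (0 * x))) \<Theta>"
    by (rule ncg_integral_mono) (auto simp: indicator_def)
  also have "\<dots> = 1" using ncg_integral_exp[OF \<delta> \<theta> \<Theta>, of 0] by (simp add: wfun_def vfun_def)
  finally show ?thesis .
qed

text \<open>Linearity and monotone convergence: \<open>ncg_integral\<close> behaves like a nonnegative integral, which
  lets us pass from indicators to all nonnegative Borel functions.\<close>
lemma ncg_integral_add: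
  assumes "h1 \<in> borel_measurable borel" "h2 \<in> borel_measurable borel"
  shows "ncg_integral \<delta> \<theta> (\<lambda>x. h1 x + h2 x) \<Theta> = ncg_integral \<delta> \<theta> h1 \<Theta> + ncg_integral \<delta> \<theta> h2 \<Theta>"
proof -
  have "ennreal (poisson_weight \<Theta> n) * (\<integral>\<^sup>+ g. h1 (\<theta> * g) + h2 (\<theta> * g) \<partial>gamma_measure (\<delta> + real n))
     = ennreal (poisson_weight \<Theta> n) * (\<integral>\<^sup>+ g. h1 (\<theta> * g) \<partial>gamma_measure (\<delta> + real n))
       + ennreal (poisson_weight \<Theta> n) * (\<integral>\<^sup>+ g. h2 (\<theta> * g) \<partial>gamma_measure (\<delta> + real n))" for n
    using assms by (simp add: nn_integral_add gamma_measure_def distrib_left)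
  thus ?thesis unfolding ncg_integral_def
    by (simp add: suminf_add[OF summableI summableI])
qed

lemma ncg_integral_cmult:
  assumes "h \<in> borel_measurable borel"
  shows "ncg_integral \<delta> \<theta> (\<lambda>x. c * h x) \<Theta> = c * ncg_integral \<delta> \<theta> h \<Theta>"
  unfolding ncg_integral_def using assms
  by (subst ennreal_suminf_cmult[symmetric])
     (auto simp: nn_integral_cmult gamma_measure_def mult_ac intro!: suminf_cong)

lemma ncg_integral_SUP:
  assumes "\<And>i. U i \<in> borel_measurable borel" "incseq U"
  shows "ncg_integral \<delta> \<theta> (SUP i. U i) \<Theta> = (SUP i. ncg_integral \<delta> \<theta> (U i) \<Theta>)"
proof -
  have inc: "incseq (\<lambda>i. U i (\<theta> * g))" for g using assms(2) by (auto simp: incseq_def le_fun_def)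
  have mc: "(\<integral>\<^sup>+ g. (SUP i. U i) (\<theta> * g) \<partial>gamma_measure (\<delta> + real n))
     = (SUP i. \<integral>\<^sup>+ g. U i (\<theta> * g) \<partial>gamma_measure (\<delta> + real n))" for n
  proof -
    have "(\<integral>\<^sup>+ g. (SUP i. U i) (\<theta> * g) \<partial>gamma_measure (\<delta> + real n))
       = (\<integral>\<^sup>+ g. (SUP i. U i (\<theta> * g)) \<partial>gamma_measure (\<delta> + real n))"
      by (auto simp: image_comp comp_def intro!: nn_integral_cong)
    also have "\<dots> = (SUP i. \<integral>\<^sup>+ g. U i (\<theta> * g) \<partial>gamma_measure (\<delta> + real n))"
      using assms inc
      by (intro nn_integral_monotone_convergence_SUP) (auto simp: gamma_measure_def incseq_def le_fun_def)
    finally show ?thesis .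
  qed
  have "ncg_integral \<delta> \<theta> (SUP i. U i) \<Theta>
     = (\<Sum>n. SUP i. ennreal (poisson_weight \<Theta> n) * (\<integral>\<^sup>+ g. U i (\<theta> * g) \<partial>gamma_measure (\<delta> + real n)))"
    unfolding ncg_integral_def mc by (simp add: SUP_mult_left_ennreal)
  also have "\<dots> = (SUP i. \<Sum>n. ennreal (poisson_weight \<Theta> n) * (\<integral>\<^sup>+ g. U i (\<theta> * g) \<partial>gamma_measure (\<delta> + real n)))"
    using inc by (intro ennreal_suminf_SUP_eq) (auto simp: incseq_def intro!: mult_left_mono nn_integral_mono)
  finally show ?thesis unfolding ncg_integral_def .
qed

section \<open>Gaussian integrals of exponential-quadratic functions\<close>

text \<open>Completing the square: the standard normal density tilted by \<open>exp (a x + c x\<^sup>2)\<close>, \<open>c < 1/2\<close>, is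
  a multiple of the \<open>N(a/K, 1/K)\<close> density, \<open>K = 1 - 2 c\<close>.\<close>
lemma std_normal_tilt:
  fixes c a x :: real
  assumes c: "c < 1/2"
  defines "K \<equiv> 1 - 2 * c"
  shows "std_normal_density x * exp (a * x + c * x\<^sup>2)
       = (exp (a\<^sup>2 / (2 * K)) / sqrt K) * normal_density (a / K) (1 / sqrt K) x"
proof -
  have K: "K > 0" using c by (simp add: K_def)
  have var: "(1 / sqrt K)\<^sup>2 = 1 / K" using K by (simp add: power_divide)
  have sd: "sqrt (2 * pi * (1 / K)) = sqrt (2 * pi) / sqrt K"
    by (simp add: real_sqrt_divide real_sqrt_mult)
  have "- (x - a / K)\<^sup>2 / (2 * (1 / K)) = - (K * x\<^sup>2) / 2 + a * x - a\<^sup>2 / (2 * K)"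
    using K by (simp add: power2_eq_square field_simps)
  also have "- (K * x\<^sup>2) / 2 = - x\<^sup>2 / 2 + c * x\<^sup>2"
    by (simp add: K_def field_simps)
  finally have square: "- (x - a / K)\<^sup>2 / (2 * (1 / K)) = - x\<^sup>2 / 2 + (a * x + c * x\<^sup>2) - a\<^sup>2 / (2 * K)"
    by simp
  have "normal_density (a / K) (1 / sqrt K) x
      = 1 / (sqrt (2 * pi) / sqrt K) * exp (- x\<^sup>2 / 2 + (a * x + c * x\<^sup>2) - a\<^sup>2 / (2 * K))"
    unfolding normal_density_def var sd square ..
  also have "\<dots> = sqrt K / sqrt (2 * pi) * (exp (- x\<^sup>2 / 2) * exp (a * x + c * x\<^sup>2) / exp (a\<^sup>2 / (2 * K)))"
    by (simp only: exp_add exp_diff) simp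
  finally have "normal_density (a / K) (1 / sqrt K) x
      = sqrt K / sqrt (2 * pi) * (exp (- x\<^sup>2 / 2) * exp (a * x + c * x\<^sup>2) / exp (a\<^sup>2 / (2 * K)))" .
  thus ?thesis
    using K by (simp add: std_normal_density_def field_simps)
qed

lemma std_normal_exp_quadratic:
  fixes c a :: real
  assumes c: "c < 1/2"
  shows "(\<integral>\<^sup>+ x. ennreal (std_normal_density x) * ennreal (exp (a * x + c * x\<^sup>2)) \<partial>lborel)
       = ennreal (exp (a\<^sup>2 / (2 * (1 - 2 * c))) / sqrt (1 - 2 * c))"
proof -
  define K where "K = 1 - 2 * c"
  have K: "K > 0" using c by (simp add: K_def)
  have total: "(\<integral>\<^sup>+ x. ennreal (normal_density (a / K) (1 / sqrt K) x) \<partial>lborel) = 1"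
  proof -
    interpret prob_space "density lborel (\<lambda>x. ennreal (normal_density (a / K) (1 / sqrt K) x))"
      by (rule prob_space_normal_density) (use K in simp)
    show ?thesis using emeasure_space_1 by (simp add: emeasure_density)
  qed
  have "(\<integral>\<^sup>+ x. ennreal (std_normal_density x) * ennreal (exp (a * x + c * x\<^sup>2)) \<partial>lborel)
      = (\<integral>\<^sup>+ x. ennreal (exp (a\<^sup>2 / (2 * K)) / sqrt K)
                  * ennreal (normal_density (a / K) (1 / sqrt K) x) \<partial>lborel)"
    using std_normal_tilt[OF c] K
    by (intro nn_integral_cong) (simp add: K_def ennreal_mult[symmetric])
  also have "\<dots> = ennreal (exp (a\<^sup>2 / (2 * K)) / sqrt K)"
    by (subst nn_integral_cmult) (auto simp: total)
  finally show ?thesis unfolding K_def .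
qed

lemma std_normal_exp_leverage:
  fixes x m a b c :: real
  assumes x: "x \<ge> 0" and c: "c < 1/2"
  shows "(\<integral>\<^sup>+ e. ennreal (std_normal_density e)
              * ennreal (exp (m * x + a * sqrt x * e + c * (e - b * sqrt x)\<^sup>2)) \<partial>lborel)
       = ennreal (exp ((m + c * b\<^sup>2 + (a - 2 * c * b)\<^sup>2 / (2 * (1 - 2 * c))) * x) / sqrt (1 - 2 * c))"
proof -
  define A where "A = (a - 2 * c * b) * sqrt x"
  have sx: "(sqrt x)\<^sup>2 = x" using x by simp
  have split: "exp (m * x + a * sqrt x * e + c * (e - b * sqrt x)\<^sup>2)
             = exp (m * x + c * b\<^sup>2 * x) * exp (A * e + c * e\<^sup>2)" for e
  proof -
    have "m * x + a * sqrt x * e + c * (e - b * sqrt x)\<^sup>2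
        = (m * x + c * b\<^sup>2 * (sqrt x)\<^sup>2) + (A * e + c * e\<^sup>2)"
      unfolding A_def by (simp add: power2_eq_square algebra_simps)
    thus ?thesis unfolding sx exp_add[symmetric] by simp
  qed
  have "(\<integral>\<^sup>+ e. ennreal (std_normal_density e)
              * ennreal (exp (m * x + a * sqrt x * e + c * (e - b * sqrt x)\<^sup>2)) \<partial>lborel)
      = (\<integral>\<^sup>+ e. ennreal (exp (m * x + c * b\<^sup>2 * x))
              * (ennreal (std_normal_density e) * ennreal (exp (A * e + c * e\<^sup>2))) \<partial>lborel)"
    by (intro nn_integral_cong, subst split) (simp add: ennreal_mult mult_ac)
  also have "\<dots> = ennreal (exp (m * x + c * b\<^sup>2 * x))
                  * ennreal (exp (A\<^sup>2 / (2 * (1 - 2 * c))) / sqrt (1 - 2 * c))"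
    by (subst nn_integral_cmult) (auto simp: std_normal_exp_quadratic[OF c])
  also have "\<dots> = ennreal (exp ((m + c * b\<^sup>2 + (a - 2 * c * b)\<^sup>2 / (2 * (1 - 2 * c))) * x)
                         / sqrt (1 - 2 * c))"
  proof -
    have "A\<^sup>2 = (a - 2 * c * b)\<^sup>2 * x" unfolding A_def by (simp add: power_mult_distrib sx)
    hence "m * x + c * b\<^sup>2 * x + A\<^sup>2 / (2 * (1 - 2 * c))
         = (m + c * b\<^sup>2 + (a - 2 * c * b)\<^sup>2 / (2 * (1 - 2 * c))) * x"
      by (simp add: algebra_simps)
    thus ?thesis by (simp add: ennreal_mult'[symmetric] exp_add[symmetric])
  qed
  finally show ?thesis .
qed

section \<open>Conditional expectations and independence\<close>

text \<open>If \<open>X\<close> and an \<open>F\<close>-measurable \<open>Y\<close> have the same integral over every \<open>A \<in> F\<close>, then they have the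
  same integral against every nonnegative \<open>F\<close>-measurable weight (both equal \<open>\<integral> g E[X|F]\<close>).\<close>
lemma nn_integral_weight_extend:
  assumes sfs: "sigma_finite_subalgebra M F"
    and X[measurable]: "X \<in> borel_measurable M" and Y[measurable]: "Y \<in> borel_measurable F"
    and eq: "\<And>A. A \<in> sets F \<Longrightarrow> (\<integral>\<^sup>+ x. indicator A x * X x \<partial>M) = (\<integral>\<^sup>+ x. indicator A x * Y x \<partial>M)"
    and g[measurable]: "g \<in> borel_measurable F"
  shows "(\<integral>\<^sup>+ x. g x * X x \<partial>M) = (\<integral>\<^sup>+ x. g x * Y x \<partial>M)"
proof -
  interpret sigma_finite_subalgebra M F by (rule sfs)
  have "AE x in M. Y x = nn_cond_exp M F X x"
  proof (rule nn_cond_exp_charact)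
    fix A assume "A \<in> sets F"
    thus "(\<integral>\<^sup>+ x\<in>A. X x \<partial>M) = (\<integral>\<^sup>+ x\<in>A. Y x \<partial>M)" using eq by (simp add: mult.commute)
  qed auto
  hence "(\<integral>\<^sup>+ x. g x * Y x \<partial>M) = (\<integral>\<^sup>+ x. g x * nn_cond_exp M F X x \<partial>M)"
    by (intro nn_integral_cong_AE) auto
  also have "\<dots> = (\<integral>\<^sup>+ x. g x * X x \<partial>M)"
    by (rule nn_cond_exp_intg) auto
  finally show ?thesis ..
qed

lemma real_cond_exp_charact_nn:
  assumes sfs: "sigma_finite_subalgebra M F"
    and X[measurable]: "X \<in> borel_measurable M" and Xnn: "AE x in M. X x \<ge> 0"
    and Y[measurable]: "Y \<in> borel_measurable F" and Ynn: "\<And>x. Y x \<ge> 0"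
    and eq: "\<And>A. A \<in> sets F \<Longrightarrow>
               (\<integral>\<^sup>+ x. indicator A x * ennreal (X x) \<partial>M) = (\<integral>\<^sup>+ x. indicator A x * ennreal (Y x) \<partial>M)"
  shows "AE x in M. real_cond_exp M F X x = Y x"
proof -
  interpret sigma_finite_subalgebra M F by (rule sfs)
  have pos: "AE x in M. ennreal (Y x) = nn_cond_exp M F (\<lambda>x. ennreal (X x)) x"
  proof (rule nn_cond_exp_charact)
    fix A assume "A \<in> sets F"
    thus "(\<integral>\<^sup>+ x\<in>A. ennreal (X x) \<partial>M) = (\<integral>\<^sup>+ x\<in>A. ennreal (Y x) \<partial>M)"
      using eq by (simp add: mult.commute)
  qed auto
  have neg: "AE x in M. (0::ennreal) = nn_cond_exp M F (\<lambda>x. ennreal (- X x)) x"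
  proof (rule nn_cond_exp_charact)
    fix A assume "A \<in> sets F"
    show "(\<integral>\<^sup>+ x\<in>A. ennreal (- X x) \<partial>M) = (\<integral>\<^sup>+ x\<in>A. 0 \<partial>M)"
      using Xnn by (intro nn_integral_cong_AE) (auto simp: ennreal_neg)
  qed auto
  show ?thesis using pos neg
  proof eventually_elim
    case (elim x)
    have "real_cond_exp M F X x = enn2real (nn_cond_exp M F (\<lambda>x. ennreal (X x)) x)
                                  - enn2real (nn_cond_exp M F (\<lambda>x. ennreal (- X x)) x)"
      by (simp add: real_cond_exp_def)
    also have "\<dots> = Y x"
      unfolding elim(1)[symmetric] elim(2)[symmetric] using Ynn by simp
    finally show ?case .
  qed
qed

lemma (in prob_space) indep_set_mono_swap:
  assumes "indep_set A B" "A' \<subseteq> B" "B' \<subseteq> A"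
  shows "indep_set A' B'"
proof -
  have "prob (a \<inter> b) = prob a * prob b" if "a \<in> A'" "b \<in> B'" for a b
    using assms(1) that assms(2,3) indep_setD[of A B b a] by (auto simp: Int_commute mult.commute)
  thus ?thesis using assms indep_setD_ev1 indep_setD_ev2 by (intro indep_setI) blast+
qed

section \<open>Elementary identities for the coefficient recursion\<close>

lemma vfun_alt: "1 - \<theta> * x \<noteq> 0 \<Longrightarrow> vfun x \<theta> = 1 / (1 - \<theta> * x) - 1"
  unfolding vfun_def by (simp add: field_simps)

text \<open>This is what turns
  the physical recursion into the recursion with starred parameters.\<close>
lemma wfun_vfun_shift:
  fixes \<theta> Y X L \<theta>' :: real
  assumes L: "L = 1 - \<theta> * Y" "L > 0" and \<theta>': "\<theta>' = \<theta> / L" and X: "\<theta>' * X < 1"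
  shows "wfun (Y + X) \<theta> = wfun Y \<theta> + wfun X \<theta>'"
    and "vfun (Y + X) \<theta> = vfun Y \<theta> + vfun X \<theta>' / L"
proof -
  have factor: "1 - \<theta> * (Y + X) = L * (1 - \<theta>' * X)"
    using L \<theta>' by (simp add: algebra_simps)
  have X': "1 - \<theta>' * X > 0" using X by simp
  show "wfun (Y + X) \<theta> = wfun Y \<theta> + wfun X \<theta>'"
    unfolding wfun_def factor using L X' by (simp add: ln_mult L(1)[symmetric])
  have "vfun (Y + X) \<theta> = 1 / (L * (1 - \<theta>' * X)) - 1"
    using L X' by (subst vfun_alt) (auto simp: factor)
  also have "\<dots> = (1 / L - 1) + (1 / (1 - \<theta>' * X) - 1) / L"
    using L X' by (simp add: field_simps)
  also have "\<dots> = vfun Y \<theta> + vfun X \<theta>' / L"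
    using L X' by (simp add: vfun_alt)
  finally show "vfun (Y + X) \<theta> = vfun Y \<theta> + vfun X \<theta>' / L" .
qed

text \<open>The exponent produced by one period of the physical dynamics under the discount factor
  (\<open>\<nu>\<^sub>2 = \<lambda> + 1/2\<close>) is \<open>Y\<^sup>* + X\<close>, where \<open>X\<close> is the starred recursion variable.\<close>
lemma starred_exponent:
  fixes \<nu>1 lm z B1 C1 \<gamma> :: real
  assumes C: "1 - 2 * C1 \<noteq> 0"
  shows "(- \<nu>1 - (lm + 1/2) * lm + z * lm + B1) + C1 * \<gamma>\<^sup>2
          + ((z - (lm + 1/2)) - 2 * C1 * \<gamma>)\<^sup>2 / (2 * (1 - 2 * C1))
       = (- lm\<^sup>2 / 2 - \<nu>1 + 1/8)
         + (z * (- (1/2)) + B1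
            + (z\<^sup>2 / 2 + (\<gamma> + lm + 1/2)\<^sup>2 * C1 - 2 * C1 * (\<gamma> + lm + 1/2) * z) / (1 - 2 * C1))"
  using C by (simp add: field_simps power2_eq_square)

lemma sum_lag_shift:
  fixes h :: "nat \<Rightarrow> real" and x :: "int \<Rightarrow> real"
  assumes p: "p \<ge> 1"
  shows "(\<Sum>i=1..p. h i * x (s + 1 + 1 - int i))
       = h 1 * x (s + 1) + (\<Sum>i=1..p. (if i \<le> p - 1 then h (i + 1) else 0) * x (s + 1 - int i))"
proof -
  have "(\<Sum>i=1..p. h i * x (s + 1 + 1 - int i)) = h 1 * x (s + 1) + (\<Sum>i=2..p. h i * x (s + 1 + 1 - int i))"
    using p by (simp add: sum.atLeast_Suc_atMost numeral_2_eq_2 add_ac)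
  also have "(\<Sum>i=2..p. h i * x (s + 1 + 1 - int i)) = (\<Sum>i=1..p-1. h (i + 1) * x (s + 1 - int i))"
    using p sum.shift_bounds_cl_nat_ivl[of "\<lambda>i. h i * x (s + 1 + 1 - int i)" 1 1 "p - 1"]
    by (simp add: numeral_2_eq_2 algebra_simps)
  also have "\<dots> = (\<Sum>i=1..p. (if i \<le> p - 1 then h (i + 1) else 0) * x (s + 1 - int i))"
  proof -
    have "{1..p} = insert p {1..p-1}" using p by auto
    thus ?thesis using p by (simp add: sum.insert)
  qed
  finally show ?thesis .
qed

section \<open>The LHARG model under the physical measure\<close>

text \<open>Only the hypotheses about periods \<open>s \<ge> t0\<close> are needed:
  \<open>\<epsilon>\<^sub>s\<^sub>+\<^sub>1\<close> is independent of \<open>\<sigma>(F\<^sub>s, RV\<^sub>s\<^sub>+\<^sub>1)\<close>, and \<open>RV\<^sub>s\<^sub>+\<^sub>1\<close> has the noncentral gamma law given \<open>F\<^sub>s\<close>.\<close>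
locale lharg =
  fixes M :: "'a measure" and eps RV :: "int \<Rightarrow> 'a \<Rightarrow> real"
    and \<delta> \<theta> d \<gamma> :: real and p q :: nat and \<beta> \<alpha> :: "nat \<Rightarrow> real" and t0 :: int
  assumes P: "prob_space M"
    and eps_dist: "\<forall>u. distributed M lborel (eps u) std_normal_density"
    and RV_meas: "\<forall>u. RV u \<in> borel_measurable M"
    and RV_pos: "\<forall>u. \<forall>\<omega>\<in>space M. RV u \<omega> > 0"
    and \<delta>_pos: "\<delta> > 0" and \<theta>_pos: "\<theta> > 0" and d_nonneg: "d \<ge> 0"
    and \<beta>_nonneg: "\<forall>i. \<beta> i \<ge> 0" and \<alpha>_nonneg: "\<forall>j. \<alpha> j \<ge> 0"
    and eps_indep_past: "\<forall>s\<ge>t0. prob_space.indep_set M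
            {eps (s + 1) -` B \<inter> space M | B. B \<in> sets borel} (sets (filt_plus M eps RV s))"
    and RV_cond_law: "\<forall>s\<ge>t0. \<forall>A\<in>sets (filt M eps RV s). \<forall>B\<in>sets (borel :: real measure).
            measure M (A \<inter> (RV (s + 1) -` B \<inter> space M)) =
            (\<integral>\<omega>. indicator A \<omega> * ncgamma_prob \<delta> (Theta d p q \<beta> \<alpha> \<gamma> eps RV s \<omega>) \<theta> B \<partial>M)"
begin

sublocale prob_space M by (rule P)

abbreviation "F s \<equiv> filt M eps RV s"
abbreviation "Fp s \<equiv> filt_plus M eps RV s"
abbreviation "Th s \<equiv> Theta d p q \<beta> \<alpha> \<gamma> eps RV s"

definition generators :: "int \<Rightarrow> 'a set set" where
  "generators s = {A. \<exists>u B. u \<le> s \<and> B \<in> sets borel \<and>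
                      (A = eps u -` B \<inter> space M \<or> A = RV u -` B \<inter> space M)}"

lemma eps_measurable[measurable]: "eps u \<in> borel_measurable M"
  using distributed_measurable[OF eps_dist[rule_format, of u]] by simp

lemma RV_measurable[measurable]: "RV u \<in> borel_measurable M"
  using RV_meas by simp

lemma generators_mono: "s \<le> s' \<Longrightarrow> generators s \<subseteq> generators s'"
  unfolding generators_def by (blast intro: order_trans)

lemma generators_sets: "generators s \<subseteq> sets M"
  unfolding generators_def by auto

lemma generators_Pow: "generators s \<subseteq> Pow (space M)"
  unfolding generators_def by auto

lemma sets_F: "sets (F s) = sigma_sets (space M) (generators s)"
  unfolding filt_def generators_def[symmetric] using generators_Pow by (simp add: sets_measure_of)

lemma space_F[simp]: "space (F s) = space M"
  unfolding filt_def by (simp add: space_measure_of_conv)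

lemma F_subalg: "subalgebra M (F s)"
  unfolding subalgebra_def sets_F by (simp add: sets.sigma_sets_subset[OF generators_sets])

lemma F_sigma_finite: "sigma_finite_subalgebra M (F s)"
  by (rule finite_measure_subalgebra_is_sigma_finite, unfold_locales) (rule F_subalg)

lemma F_mono: "s \<le> s' \<Longrightarrow> sets (F s) \<subseteq> sets (F s')"
  unfolding sets_F by (rule sigma_sets_mono') (rule generators_mono)

lemma measurable_F_mono: "f \<in> borel_measurable (F s) \<Longrightarrow> s \<le> s' \<Longrightarrow> f \<in> borel_measurable (F s')"
  by (rule measurable_from_subalg[of "F s'"]) (auto simp: subalgebra_def F_mono)

lemma measurable_F_M: "f \<in> borel_measurable (F s) \<Longrightarrow> f \<in> borel_measurable M"
  by (rule measurable_from_subalg[OF F_subalg])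

lemma sets_F_M: "A \<in> sets (F s) \<Longrightarrow> A \<in> sets M"
  using F_subalg by (auto simp: subalgebra_def)

lemma RV_F: "u \<le> s \<Longrightarrow> RV u \<in> borel_measurable (F s)"
  by (rule measurableI) (auto simp: sets_F generators_def intro!: sigma_sets.Basic)

lemma eps_F: "u \<le> s \<Longrightarrow> eps u \<in> borel_measurable (F s)"
  by (rule measurableI) (auto simp: sets_F generators_def intro!: sigma_sets.Basic)

lemma lev_F: "u \<le> s \<Longrightarrow> lev c eps RV u \<in> borel_measurable (F s)"
proof -
  assume "u \<le> s"
  note [measurable] = RV_F[OF this] eps_F[OF this]
  show ?thesis unfolding lev_def by measurable
qed

lemma lagged_RV_F[measurable]: "(\<lambda>\<omega>. \<Sum>i=1..n. b i * RV (s + 1 - int i) \<omega>) \<in> borel_measurable (F s)"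
  by (intro borel_measurable_sum borel_measurable_times borel_measurable_const RV_F) auto

lemma lagged_lev_F[measurable]:
  "(\<lambda>\<omega>. \<Sum>j=1..n. b j * lev c eps RV (s + 1 - int j) \<omega>) \<in> borel_measurable (F s)"
  by (intro borel_measurable_sum borel_measurable_times borel_measurable_const lev_F) auto

lemma Theta_F[measurable]: "Th s \<in> borel_measurable (F s)"
  unfolding Theta_def by measurable

lemma Theta_nonneg: "\<omega> \<in> space M \<Longrightarrow> Th s \<omega> \<ge> 0"
  unfolding Theta_def using d_nonneg \<beta>_nonneg \<alpha>_nonneg RV_pos
  by (intro add_nonneg_nonneg sum_nonneg mult_nonneg_nonneg) (auto simp: lev_def less_imp_le)

lemma sets_Fp:
  "sets (Fp s) = sigma_sets (space M) (sets (F s) \<union> {RV (s + 1) -` B \<inter> space M | B. B \<in> sets borel})"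
  unfolding filt_plus_def using sets.space_closed[of "F s"] by (subst sets_measure_of) auto

lemma space_Fp[simp]: "space (Fp s) = space M"
  unfolding filt_plus_def by (simp add: space_measure_of_conv)

lemma Fp_subalg: "subalgebra M (Fp s)"
proof -
  have "sets (Fp s) \<subseteq> sets (F (s + 1))"
    unfolding sets_Fp using F_mono[of s "s + 1"] RV_F[of "s + 1" "s + 1"]
    by (intro sets.sigma_sets_subset[of _ "F (s + 1)", simplified]) (auto simp: measurable_sets)
  thus ?thesis using F_subalg[of "s + 1"] by (auto simp: subalgebra_def)
qed

lemma measurable_F_Fp: "f \<in> borel_measurable (F s) \<Longrightarrow> f \<in> borel_measurable (Fp s)"
  by (rule measurable_from_subalg) (auto simp: subalgebra_def sets_Fp)

lemma RV_Fp: "RV (s + 1) \<in> borel_measurable (Fp s)"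
  by (rule measurableI) (auto simp: sets_Fp)


lemma eps_indep_Fp:
  fixes T :: "'b measure"
  assumes s: "s \<ge> t0" and Y: "Y \<in> measurable (Fp s) T" and e: "e \<in> measurable borel T"
  shows "indep_var T Y T (\<lambda>\<omega>. e (eps (s + 1) \<omega>))"
proof -
  let ?E = "{eps (s + 1) -` B \<inter> space M | B. B \<in> sets borel}"
  let ?V = "vimage_algebra (space M) (eps (s + 1)) borel"
  have E: "sets ?V = ?E"
    by (subst sets_vimage_algebra2) auto
  have sigma_Y: "sigma_sets (space M) {Y -` A \<inter> space M | A. A \<in> sets T} \<subseteq> sets (Fp s)"
    using measurable_sets[OF Y] by (intro sets.sigma_sets_subset[of _ "Fp s", simplified]) auto
  have "{(\<lambda>\<omega>. e (eps (s + 1) \<omega>)) -` A \<inter> space M | A. A \<in> sets T} \<subseteq> sets ?V"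
  proof safe
    fix A assume "A \<in> sets T"
    hence "e -` A \<in> sets borel" using measurable_sets[OF e] by simp
    moreover have "(\<lambda>\<omega>. e (eps (s + 1) \<omega>)) -` A \<inter> space M = eps (s + 1) -` (e -` A) \<inter> space M" by auto
    ultimately show "(\<lambda>\<omega>. e (eps (s + 1) \<omega>)) -` A \<inter> space M \<in> sets ?V" unfolding E by auto
  qed
  hence sigma_e: "sigma_sets (space M) {(\<lambda>\<omega>. e (eps (s + 1) \<omega>)) -` A \<inter> space M | A. A \<in> sets T} \<subseteq> ?E"
    using sets.sigma_sets_subset[of _ ?V] unfolding E by simp
  have "indep_set ?E (sets (Fp s))" using eps_indep_past s by auto
  hence "indep_set (sigma_sets (space M) {Y -` A \<inter> space M | A. A \<in> sets T})
                   (sigma_sets (space M) {(\<lambda>\<omega>. e (eps (s + 1) \<omega>)) -` A \<inter> space M | A. A \<in> sets T})"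
    using sigma_Y sigma_e by (rule indep_set_mono_swap)
  thus ?thesis unfolding indep_var_eq
    using measurable_from_subalg[OF Fp_subalg Y] e by auto
qed

lemma nn_integral_eps:
  assumes f[measurable]: "f \<in> borel_measurable borel"
  shows "(\<integral>\<^sup>+ \<omega>. f (eps u \<omega>) \<partial>M) = (\<integral>\<^sup>+ e. ennreal (std_normal_density e) * f e \<partial>lborel)"
proof -
  have "(\<integral>\<^sup>+ \<omega>. f (eps u \<omega>) \<partial>M) = (\<integral>\<^sup>+ e. f e \<partial>distr M lborel (eps u))"
    by (subst nn_integral_distr) auto
  also have "distr M lborel (eps u) = density lborel std_normal_density"
    using eps_dist by (simp add: distributed_distr_eq_density)
  finally show ?thesis by (subst (asm) nn_integral_density) auto
qed

text \<open>Conditioning on \<open>\<sigma>(F\<^sub>s, RV\<^sub>s\<^sub>+\<^sub>1)\<close>, the shock \<open>\<epsilon>\<^sub>s\<^sub>+\<^sub>1\<close> can be integrated out against the standard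
  normal density (independence and Fubini).\<close>
lemma eps_step:
  assumes s: "s \<ge> t0" and G[measurable]: "G \<in> borel_measurable (Fp s)"
    and K[measurable]: "(\<lambda>(x, e). K x e) \<in> borel_measurable (borel \<Otimes>\<^sub>M borel)"
  shows "(\<integral>\<^sup>+ \<omega>. G \<omega> * K (RV (s + 1) \<omega>) (eps (s + 1) \<omega>) \<partial>M)
       = (\<integral>\<^sup>+ \<omega>. G \<omega> * (\<integral>\<^sup>+ e. ennreal (std_normal_density e) * K (RV (s + 1) \<omega>) e \<partial>lborel) \<partial>M)"
proof -
  let ?T = "borel \<Otimes>\<^sub>M borel :: (ennreal \<times> real) measure"
  \<comment> \<open>\<open>\<epsilon>\<^sub>s\<^sub>+\<^sub>1\<close> is embedded into the value space of \<open>(G, RV\<^sub>s\<^sub>+\<^sub>1)\<close> to apply independence\<close>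
  define emb where "emb = (\<lambda>x::real. (0::ennreal, x))"
  let ?N = "distr M ?T (\<lambda>\<omega>. emb (eps (s + 1) \<omega>))"
  define Y where "Y = (\<lambda>\<omega>. (G \<omega>, RV (s + 1) \<omega>))"
  have YF: "Y \<in> measurable (Fp s) ?T" unfolding Y_def using RV_Fp by measurable
  have YM[measurable]: "Y \<in> measurable M ?T" by (rule measurable_from_subalg[OF Fp_subalg YF])
  have emb[measurable]: "emb \<in> measurable borel ?T" unfolding emb_def by measurable
  define H where "H = (\<lambda>(y :: ennreal \<times> real, e :: ennreal \<times> real). fst y * K (snd y) (snd e))"
  have H[measurable]: "H \<in> borel_measurable (?T \<Otimes>\<^sub>M ?T)"
    using measurable_compose[OF _ K, of "\<lambda>z :: (ennreal \<times> real) \<times> (ennreal \<times> real). (snd (fst z), snd (snd z))"]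
    unfolding H_def by (simp add: case_prod_beta')
  interpret N: prob_space ?N by (rule prob_space_distr) simp
  have joint: "distr M (?T \<Otimes>\<^sub>M ?T) (\<lambda>\<omega>. (Y \<omega>, emb (eps (s + 1) \<omega>))) = distr M ?T Y \<Otimes>\<^sub>M ?N"
    using eps_indep_Fp[OF s YF emb] by (simp add: indep_var_distribution_eq)
  have "(\<integral>\<^sup>+ \<omega>. G \<omega> * K (RV (s + 1) \<omega>) (eps (s + 1) \<omega>) \<partial>M)
      = (\<integral>\<^sup>+ \<omega>. H (Y \<omega>, emb (eps (s + 1) \<omega>)) \<partial>M)"
    by (simp add: H_def Y_def emb_def)
  also have "\<dots> = (\<integral>\<^sup>+ z. H z \<partial>(distr M ?T Y \<Otimes>\<^sub>M ?N))"
    by (subst joint[symmetric], subst nn_integral_distr) auto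
  also have "\<dots> = (\<integral>\<^sup>+ y. (\<integral>\<^sup>+ e. H (y, e) \<partial>?N) \<partial>distr M ?T Y)"
    by (subst N.nn_integral_fst[symmetric]) auto
  also have "\<dots> = (\<integral>\<^sup>+ \<omega>. (\<integral>\<^sup>+ e. H (Y \<omega>, e) \<partial>?N) \<partial>M)"
    by (subst nn_integral_distr) (auto intro!: N.borel_measurable_nn_integral_fst)
  also have "\<dots> = (\<integral>\<^sup>+ \<omega>. G \<omega> * (\<integral>\<^sup>+ e. ennreal (std_normal_density e) * K (RV (s + 1) \<omega>) e \<partial>lborel) \<partial>M)"
  proof (intro nn_integral_cong)
    fix \<omega>
    have "(\<integral>\<^sup>+ e. H (Y \<omega>, e) \<partial>?N) = (\<integral>\<^sup>+ \<omega>'. G \<omega> * K (RV (s + 1) \<omega>) (eps (s + 1) \<omega>') \<partial>M)"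
      by (subst nn_integral_distr) (auto simp: H_def Y_def emb_def)
    also have "\<dots> = (\<integral>\<^sup>+ e. ennreal (std_normal_density e) * (G \<omega> * K (RV (s + 1) \<omega>) e) \<partial>lborel)"
      by (rule nn_integral_eps) measurable
    also have "\<dots> = G \<omega> * (\<integral>\<^sup>+ e. ennreal (std_normal_density e) * K (RV (s + 1) \<omega>) e \<partial>lborel)"
      by (subst nn_integral_cmult[symmetric]) (auto simp: mult_ac)
    finally show "(\<integral>\<^sup>+ e. H (Y \<omega>, e) \<partial>?N)
        = G \<omega> * (\<integral>\<^sup>+ e. ennreal (std_normal_density e) * K (RV (s + 1) \<omega>) e \<partial>lborel)" .
  qed
  finally show ?thesis .
qed

lemma RV_step_indicator:
  assumes s: "s \<ge> t0" and A: "A \<in> sets (F s)" and B: "B \<in> sets borel"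
  shows "(\<integral>\<^sup>+ \<omega>. indicator A \<omega> * indicator B (RV (s + 1) \<omega>) \<partial>M)
       = (\<integral>\<^sup>+ \<omega>. indicator A \<omega> * ncg_integral \<delta> \<theta> (indicator B) (Th s \<omega>) \<partial>M)"
proof -
  have AM[measurable]: "A \<in> sets M" using A by (rule sets_F_M)
  have Th[measurable]: "Th s \<in> borel_measurable M" by (rule measurable_F_M[OF Theta_F])
  have ncg: "ncg_integral \<delta> \<theta> (indicator B) (Th s \<omega>) = ennreal (ncgamma_prob \<delta> (Th s \<omega>) \<theta> B)"
    if "\<omega> \<in> space M" for \<omega>
    using ncg_integral_indicator[OF \<delta>_pos Theta_nonneg[OF that] B] .
  have nonneg: "ncgamma_prob \<delta> (Th s \<omega>) \<theta> B \<ge> 0" if "\<omega> \<in> space M" for \<omega>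
    using ncgamma_prob_nonneg[OF \<delta>_pos Theta_nonneg[OF that]] .
  have meas: "(\<lambda>\<omega>. indicator A \<omega> * ncgamma_prob \<delta> (Th s \<omega>) \<theta> B) \<in> borel_measurable M"
  proof -
    have "(\<lambda>\<omega>. indicator A \<omega> * enn2real (ncg_integral \<delta> \<theta> (indicator B) (Th s \<omega>))) \<in> borel_measurable M"
      by measurable
    thus ?thesis by (rule measurable_cong[THEN iffD1, rotated]) (simp add: ncg nonneg)
  qed
  have rhs: "(\<integral>\<^sup>+ \<omega>. indicator A \<omega> * ncg_integral \<delta> \<theta> (indicator B) (Th s \<omega>) \<partial>M)
           = (\<integral>\<^sup>+ \<omega>. ennreal (indicator A \<omega> * ncgamma_prob \<delta> (Th s \<omega>) \<theta> B) \<partial>M)"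
    by (intro nn_integral_cong) (simp add: ncg nonneg ennreal_mult' indicator_def)
  have finite: "(\<integral>\<^sup>+ \<omega>. indicator A \<omega> * ncg_integral \<delta> \<theta> (indicator B) (Th s \<omega>) \<partial>M) \<le> 1"
  proof -
    have "(\<integral>\<^sup>+ \<omega>. indicator A \<omega> * ncg_integral \<delta> \<theta> (indicator B) (Th s \<omega>) \<partial>M) \<le> (\<integral>\<^sup>+ \<omega>. 1 \<partial>M)"
      by (intro nn_integral_mono)
         (auto simp: indicator_def intro!: ncg_integral_indicator_le_1[OF \<delta>_pos \<theta>_pos Theta_nonneg])
    thus ?thesis by (simp add: emeasure_space_1)
  qed
  have "(\<integral>\<^sup>+ \<omega>. indicator A \<omega> * indicator B (RV (s + 1) \<omega>) \<partial>M)
      = (\<integral>\<^sup>+ \<omega>. indicator (A \<inter> (RV (s + 1) -` B \<inter> space M)) \<omega> \<partial>M)"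
    by (intro nn_integral_cong) (auto simp: indicator_def)
  also have "\<dots> = emeasure M (A \<inter> (RV (s + 1) -` B \<inter> space M))"
    using sets.Int[OF AM measurable_sets[OF RV_measurable B]] by (intro nn_integral_indicator)
  also have "\<dots> = ennreal (\<integral>\<omega>. indicator A \<omega> * ncgamma_prob \<delta> (Th s \<omega>) \<theta> B \<partial>M)"
    using RV_cond_law s A B by (simp add: emeasure_eq_measure)
  also have "\<dots> = ennreal (enn2real (\<integral>\<^sup>+ \<omega>. indicator A \<omega> * ncg_integral \<delta> \<theta> (indicator B) (Th s \<omega>) \<partial>M))"
    unfolding rhs using meas by (subst integral_eq_nn_integral) (auto simp: nonneg intro!: AE_I2)
  also have "\<dots> = (\<integral>\<^sup>+ \<omega>. indicator A \<omega> * ncg_integral \<delta> \<theta> (indicator B) (Th s \<omega>) \<partial>M)"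
    using finite by (subst ennreal_enn2real) (auto simp: top_unique less_top[symmetric])
  finally show ?thesis .
qed

lemma RV_step:
  assumes s: "s \<ge> t0" and A: "A \<in> sets (F s)" and h: "h \<in> borel_measurable borel"
  shows "(\<integral>\<^sup>+ \<omega>. indicator A \<omega> * h (RV (s + 1) \<omega>) \<partial>M)
       = (\<integral>\<^sup>+ \<omega>. indicator A \<omega> * ncg_integral \<delta> \<theta> h (Th s \<omega>) \<partial>M)"
  using h
proof (induction rule: borel_measurable_induct)
  case (cong f g)
  hence "f = g" by auto
  thus ?case using cong by simp
next
  case (set B)
  thus ?case by (rule RV_step_indicator[OF s A])
next
  case (mult u c)
  note [measurable] = measurable_F_M[OF Theta_F] sets_F_M[OF A] \<open>u \<in> borel_measurable borel\<close>
  have "(\<integral>\<^sup>+ \<omega>. indicator A \<omega> * (c * u (RV (s + 1) \<omega>)) \<partial>M)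
      = c * (\<integral>\<^sup>+ \<omega>. indicator A \<omega> * u (RV (s + 1) \<omega>) \<partial>M)"
    by (subst nn_integral_cmult[symmetric]) (auto simp: mult_ac)
  also have "\<dots> = c * (\<integral>\<^sup>+ \<omega>. indicator A \<omega> * ncg_integral \<delta> \<theta> u (Th s \<omega>) \<partial>M)"
    using mult by simp
  also have "\<dots> = (\<integral>\<^sup>+ \<omega>. indicator A \<omega> * ncg_integral \<delta> \<theta> (\<lambda>x. c * u x) (Th s \<omega>) \<partial>M)"
    by (subst nn_integral_cmult[symmetric]) (auto simp: ncg_integral_cmult mult_ac)
  finally show ?case .
next
  case (add u v)
  note [measurable] = measurable_F_M[OF Theta_F] sets_F_M[OF A]
    \<open>u \<in> borel_measurable borel\<close> \<open>v \<in> borel_measurable borel\<close>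
  have "(\<integral>\<^sup>+ \<omega>. indicator A \<omega> * (v (RV (s + 1) \<omega>) + u (RV (s + 1) \<omega>)) \<partial>M)
     = (\<integral>\<^sup>+ \<omega>. indicator A \<omega> * v (RV (s + 1) \<omega>) \<partial>M) + (\<integral>\<^sup>+ \<omega>. indicator A \<omega> * u (RV (s + 1) \<omega>) \<partial>M)"
    by (subst nn_integral_add[symmetric]) (auto simp: distrib_left)
  also have "\<dots> = (\<integral>\<^sup>+ \<omega>. indicator A \<omega> * ncg_integral \<delta> \<theta> v (Th s \<omega>) \<partial>M)
                + (\<integral>\<^sup>+ \<omega>. indicator A \<omega> * ncg_integral \<delta> \<theta> u (Th s \<omega>) \<partial>M)"
    using add by simp
  also have "\<dots> = (\<integral>\<^sup>+ \<omega>. indicator A \<omega> * ncg_integral \<delta> \<theta> (\<lambda>x. v x + u x) (Th s \<omega>) \<partial>M)"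
    by (subst nn_integral_add[symmetric]) (auto simp: ncg_integral_add distrib_left)
  finally show ?case .
next
  case (seq U)
  note [measurable] = measurable_F_M[OF Theta_F] sets_F_M[OF A] \<open>\<And>i. U i \<in> borel_measurable borel\<close>
  have "(\<integral>\<^sup>+ \<omega>. indicator A \<omega> * (SUP i. U i) (RV (s + 1) \<omega>) \<partial>M)
      = (SUP i. \<integral>\<^sup>+ \<omega>. indicator A \<omega> * U i (RV (s + 1) \<omega>) \<partial>M)"
    using seq
    by (subst nn_integral_monotone_convergence_SUP[symmetric])
       (auto simp: incseq_def le_fun_def image_comp SUP_mult_left_ennreal intro!: mult_left_mono
         nn_integral_cong)
  also have "\<dots> = (SUP i. \<integral>\<^sup>+ \<omega>. indicator A \<omega> * ncg_integral \<delta> \<theta> (U i) (Th s \<omega>) \<partial>M)"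
    using seq by simp
  also have "\<dots> = (\<integral>\<^sup>+ \<omega>. indicator A \<omega> * ncg_integral \<delta> \<theta> (SUP i. U i) (Th s \<omega>) \<partial>M)"
    using seq
    by (subst nn_integral_monotone_convergence_SUP[symmetric])
       (auto simp: incseq_def le_fun_def ncg_integral_SUP SUP_mult_left_ennreal
         intro!: mult_left_mono ncg_integral_mono)
  finally show ?case .
qed

lemma RV_step_exp:
  assumes s: "s \<ge> t0" and m: "\<theta> * \<mu> < 1" and g[measurable]: "g \<in> borel_measurable (F s)"
  shows "(\<integral>\<^sup>+ \<omega>. g \<omega> * ennreal (exp (\<mu> * RV (s + 1) \<omega>)) \<partial>M)
       = (\<integral>\<^sup>+ \<omega>. g \<omega> * ennreal (exp (- \<delta> * wfun \<mu> \<theta> + Th s \<omega> * vfun \<mu> \<theta>)) \<partial>M)"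
proof (rule nn_integral_weight_extend[OF F_sigma_finite _ _ _ g])
  fix A assume A: "A \<in> sets (F s)"
  have "(\<integral>\<^sup>+ \<omega>. indicator A \<omega> * ennreal (exp (\<mu> * RV (s + 1) \<omega>)) \<partial>M)
      = (\<integral>\<^sup>+ \<omega>. indicator A \<omega> * ncg_integral \<delta> \<theta> (\<lambda>x. ennreal (exp (\<mu> * x))) (Th s \<omega>) \<partial>M)"
    by (rule RV_step[OF s A]) measurable
  also have "\<dots> = (\<integral>\<^sup>+ \<omega>. indicator A \<omega> * ennreal (exp (- \<delta> * wfun \<mu> \<theta> + Th s \<omega> * vfun \<mu> \<theta>)) \<partial>M)"
    by (intro nn_integral_cong) (simp add: ncg_integral_exp[OF \<delta>_pos \<theta>_pos Theta_nonneg m])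
  finally show "(\<integral>\<^sup>+ \<omega>. indicator A \<omega> * ennreal (exp (\<mu> * RV (s + 1) \<omega>)) \<partial>M)
      = (\<integral>\<^sup>+ \<omega>. indicator A \<omega> * ennreal (exp (- \<delta> * wfun \<mu> \<theta> + Th s \<omega> * vfun \<mu> \<theta>)) \<partial>M)" .
qed measurable

text \<open>The conditional expectation given \<open>F\<^sub>s\<close> of \<open>exp (m RV + a sqrt RV \<epsilon> + c (\<epsilon> - b sqrt RV)\<^sup>2)\<close>
  at time \<open>s + 1\<close> is \<open>exp (- \<delta> w(\<mu>, \<theta>) + \<Theta>\<^sub>s v(\<mu>, \<theta>)) / sqrt (1 - 2c)\<close>: first integrate out \<open>\<epsilon>\<^sub>s\<^sub>+\<^sub>1\<close>,
  which leaves \<open>exp (\<mu> RV\<^sub>s\<^sub>+\<^sub>1)\<close>, then integrate out \<open>RV\<^sub>s\<^sub>+\<^sub>1\<close>.\<close>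
lemma one_period:
  assumes s: "s \<ge> t0" and c: "c < 1/2"
    and m: "\<theta> * (m + c * b\<^sup>2 + (a - 2 * c * b)\<^sup>2 / (2 * (1 - 2 * c))) < 1"
    and g[measurable]: "g \<in> borel_measurable (F s)"
  shows "(\<integral>\<^sup>+ \<omega>. g \<omega> * ennreal (exp (m * RV (s + 1) \<omega> + a * sqrt (RV (s + 1) \<omega>) * eps (s + 1) \<omega>
              + c * (eps (s + 1) \<omega> - b * sqrt (RV (s + 1) \<omega>))\<^sup>2)) \<partial>M)
       = (\<integral>\<^sup>+ \<omega>. g \<omega> * ennreal (exp (- \<delta> * wfun (m + c * b\<^sup>2 + (a - 2 * c * b)\<^sup>2 / (2 * (1 - 2 * c))) \<theta>
              + Th s \<omega> * vfun (m + c * b\<^sup>2 + (a - 2 * c * b)\<^sup>2 / (2 * (1 - 2 * c))) \<theta>)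
              / sqrt (1 - 2 * c)) \<partial>M)"
proof -
  define \<mu> where "\<mu> = m + c * b\<^sup>2 + (a - 2 * c * b)\<^sup>2 / (2 * (1 - 2 * c))"
  have gM[measurable]: "g \<in> borel_measurable M" by (rule measurable_F_M[OF g])
  have c': "0 < 1 - 2 * c" using c by simp
  have "(\<integral>\<^sup>+ \<omega>. g \<omega> * ennreal (exp (m * RV (s + 1) \<omega> + a * sqrt (RV (s + 1) \<omega>) * eps (s + 1) \<omega>
              + c * (eps (s + 1) \<omega> - b * sqrt (RV (s + 1) \<omega>))\<^sup>2)) \<partial>M)
      = (\<integral>\<^sup>+ \<omega>. g \<omega> * (\<integral>\<^sup>+ e. ennreal (std_normal_density e)
              * ennreal (exp (m * RV (s + 1) \<omega> + a * sqrt (RV (s + 1) \<omega>) * e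
              + c * (e - b * sqrt (RV (s + 1) \<omega>))\<^sup>2)) \<partial>lborel) \<partial>M)"
    by (rule eps_step[OF s measurable_F_Fp[OF g]]) measurable
  also have "\<dots> = (\<integral>\<^sup>+ \<omega>. g \<omega> * ennreal (exp (\<mu> * RV (s + 1) \<omega>) / sqrt (1 - 2 * c)) \<partial>M)"
    by (intro nn_integral_cong) (simp add: std_normal_exp_leverage[OF _ c] \<mu>_def less_imp_le RV_pos)
  also have "\<dots> = (\<integral>\<^sup>+ \<omega>. (g \<omega> * ennreal (1 / sqrt (1 - 2 * c))) * ennreal (exp (\<mu> * RV (s + 1) \<omega>)) \<partial>M)"
    using c' by (intro nn_integral_cong) (simp add: ennreal_mult[symmetric] mult_ac)
  also have "\<dots> = (\<integral>\<^sup>+ \<omega>. (g \<omega> * ennreal (1 / sqrt (1 - 2 * c)))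
                      * ennreal (exp (- \<delta> * wfun \<mu> \<theta> + Th s \<omega> * vfun \<mu> \<theta>)) \<partial>M)"
    by (rule RV_step_exp[OF s]) (use m in \<open>simp_all add: \<mu>_def\<close>)
  also have "\<dots> = (\<integral>\<^sup>+ \<omega>. g \<omega> * ennreal (exp (- \<delta> * wfun \<mu> \<theta> + Th s \<omega> * vfun \<mu> \<theta>) / sqrt (1 - 2 * c)) \<partial>M)"
    using c' by (intro nn_integral_cong) (simp add: ennreal_mult[symmetric] mult_ac)
  finally show ?thesis unfolding \<mu>_def .
qed

end

section \<open>The risk-neutral moment generating function\<close>

locale lharg_main = lharg +
  fixes r lm \<nu>1 z :: real and T :: int
  assumes Ys_cond: "1 - \<theta> * (- lm\<^sup>2 / 2 - \<nu>1 + 1/8) > 0"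
    and p_ge: "p \<ge> 1" and q_ge: "q \<ge> 1"
begin

definition "Ys = - lm\<^sup>2 / 2 - \<nu>1 + 1/8"
definition "\<nu>2 = lm + 1/2"
definition "L = 1 - \<theta> * Ys"
definition "\<theta>s = \<theta> / L"

text \<open>\<open>cf k\<close> are the coefficients \<open>(A, B, C)\<close> at time \<open>T - k\<close> of the starred recursion, \<open>Xc k\<close> the
  corresponding \<open>X\<close> and \<open>C1 k\<close> the leading leverage coefficient.\<close>
definition "cf k = coef r (- (1/2)) \<delta> \<theta>s (d / L) (\<gamma> + lm + 1/2) p q (\<lambda>i. \<beta> i / L) (\<lambda>j. \<alpha> j / L) z k"
definition "Xc k = Xcoef r (- (1/2)) \<delta> \<theta>s (d / L) (\<gamma> + lm + 1/2) p q (\<lambda>i. \<beta> i / L) (\<lambda>j. \<alpha> j / L) z k"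
definition "C1 k = snd (snd (cf k)) 1"

lemma L_pos: "L > 0" using Ys_cond by (simp add: L_def Ys_def)

lemma cf_0: "cf 0 = (0, (\<lambda>_. 0), (\<lambda>_. 0))"
  by (simp add: cf_def)

lemma cf_Suc:
  "fst (cf (Suc k)) = fst (cf k) + z * r - ln (1 - 2 * C1 k) / 2 - \<delta> * wfun (Xc k) \<theta>s + d / L * vfun (Xc k) \<theta>s"
  "fst (snd (cf (Suc k))) =
     (\<lambda>i. (if i \<le> p - 1 then fst (snd (cf k)) (i + 1) else 0) + vfun (Xc k) \<theta>s * (\<beta> i / L))"
  "snd (snd (cf (Suc k))) =
     (\<lambda>j. (if j \<le> q - 1 then snd (snd (cf k)) (j + 1) else 0) + vfun (Xc k) \<theta>s * (\<alpha> j / L))"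
  "Xc k = z * (- (1/2)) + fst (snd (cf k)) 1
          + (z\<^sup>2 / 2 + (\<gamma> + lm + 1/2)\<^sup>2 * C1 k - 2 * C1 k * (\<gamma> + lm + 1/2) * z) / (1 - 2 * C1 k)"
  unfolding cf_def Xc_def C1_def Xcoef_def by (simp_all add: Let_def case_prod_beta)

text \<open>Numerator of \<open>M\<^sub>s\<^sub>,\<^sub>s\<^sub>+\<^sub>1\<close> and the explicit form of its conditional expectation given \<open>F\<^sub>s\<close>.\<close>
definition "sdf_num s \<omega> = exp (- \<nu>1 * RV (s + 1) \<omega> - \<nu>2 * logret r lm eps RV (s + 1) \<omega>)"
definition "sdf_den s \<omega> = exp (- \<nu>2 * r - \<delta> * wfun Ys \<theta> + Th s \<omega> * vfun Ys \<theta>)"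

lemma sdf_num_pos: "sdf_num s \<omega> > 0" by (simp add: sdf_num_def)
lemma sdf_den_pos: "sdf_den s \<omega> > 0" by (simp add: sdf_den_def)

lemma sdf_num_F: "sdf_num s \<in> borel_measurable (F (s + 1))"
  using RV_F[of "s + 1" "s + 1"] eps_F[of "s + 1" "s + 1"]
  unfolding sdf_num_def logret_def by measurable

lemma sdf_den_F: "sdf_den s \<in> borel_measurable (F s)"
  unfolding sdf_den_def by measurable

text \<open>\<open>E[exp (- \<nu>\<^sub>1 RV\<^sub>s\<^sub>+\<^sub>1 - \<nu>\<^sub>2 y\<^sub>s\<^sub>+\<^sub>1) | F\<^sub>s] = sdf_den s\<close>: the one-period formula with no leverage
  term, where the exponent of \<open>RV\<^sub>s\<^sub>+\<^sub>1\<close> after integrating out \<open>\<epsilon>\<^sub>s\<^sub>+\<^sub>1\<close> is exactly \<open>Y\<^sup>*\<close>.\<close>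
lemma sdf_cond_exp:
  assumes s: "s \<ge> t0"
  shows "AE \<omega> in M. real_cond_exp M (F s) (sdf_num s) \<omega> = sdf_den s \<omega>"
proof (rule real_cond_exp_charact_nn[OF F_sigma_finite])
  show "sdf_num s \<in> borel_measurable M" by (rule measurable_F_M[OF sdf_num_F])
  show "AE x in M. 0 \<le> sdf_num s x" "\<And>x. 0 \<le> sdf_den s x"
    by (simp_all add: less_imp_le sdf_num_pos sdf_den_pos)
  fix A assume A: "A \<in> sets (F s)"
  have g[measurable]: "(\<lambda>\<omega>. indicator A \<omega> * ennreal (exp (- \<nu>2 * r))) \<in> borel_measurable (F s)"
    using A by measurable
  define m where "m = - \<nu>1 - \<nu>2 * lm"
  have Ys: "m + 0 * 0\<^sup>2 + (- \<nu>2 - 2 * 0 * 0)\<^sup>2 / (2 * (1 - 2 * 0)) = Ys"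
    by (simp add: m_def \<nu>2_def Ys_def power2_eq_square algebra_simps)
  have num: "ennreal (sdf_num s \<omega>) = ennreal (exp (- \<nu>2 * r)) * ennreal (exp (m * RV (s + 1) \<omega>
      + - \<nu>2 * sqrt (RV (s + 1) \<omega>) * eps (s + 1) \<omega> + 0 * (eps (s + 1) \<omega> - 0 * sqrt (RV (s + 1) \<omega>))\<^sup>2))" for \<omega>
    unfolding sdf_num_def logret_def m_def
    by (simp add: ennreal_mult[symmetric] exp_add[symmetric] algebra_simps)
  have den: "ennreal (sdf_den s \<omega>) = ennreal (exp (- \<nu>2 * r))
      * ennreal (exp (- \<delta> * wfun Ys \<theta> + Th s \<omega> * vfun Ys \<theta>) / sqrt (1 - 2 * 0))" for \<omega>
    unfolding sdf_den_def by (simp add: ennreal_mult[symmetric] exp_add[symmetric] algebra_simps)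
  show "(\<integral>\<^sup>+ \<omega>. indicator A \<omega> * ennreal (sdf_num s \<omega>) \<partial>M) = (\<integral>\<^sup>+ \<omega>. indicator A \<omega> * ennreal (sdf_den s \<omega>) \<partial>M)"
    using one_period[OF s _ _ g, where c=0 and b=0 and m=m and a="- \<nu>2", unfolded Ys] Ys_cond
    by (simp add: num den Ys_def mult.assoc)
qed (rule sdf_den_F)

text \<open>The integrand of \<open>E\<^sup>Q[exp (z y\<^sub>s\<^sub>,\<^sub>T) | F\<^sub>s]\<close>, with the conditional expectations in the discount
  factors replaced by their explicit values, and the claimed exponential-affine value.\<close>
definition "Q_integrand s \<omega> =
  (\<Prod>u\<in>{s..<T}. sdf_num u \<omega> / sdf_den u \<omega>) * exp (z * logret_sum r lm eps RV s T \<omega>)"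
definition "affine_mgf k s \<omega> = exp (fst (cf k) + (\<Sum>i=1..p. fst (snd (cf k)) i * RV (s + 1 - int i) \<omega>)
                                   + (\<Sum>j=1..q. snd (snd (cf k)) j * lev \<gamma> eps RV (s + 1 - int j) \<omega>))"

lemma Q_integrand_step:
  assumes "s < T"
  shows "Q_integrand s \<omega>
       = sdf_num s \<omega> / sdf_den s \<omega> * exp (z * logret r lm eps RV (s + 1) \<omega>) * Q_integrand (s + 1) \<omega>"
proof -
  have i1: "{s..<T} = insert s {s + 1..<T}" using assms by auto
  have i2: "{s + 1..T} = insert (s + 1) {s + 1 + 1..T}" using assms by auto
  have "logret_sum r lm eps RV s T \<omega> = logret r lm eps RV (s + 1) \<omega> + logret_sum r lm eps RV (s + 1) T \<omega>"
    unfolding logret_sum_def i2 by (simp add: sum.insert)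
  thus ?thesis unfolding Q_integrand_def i1 by (simp add: prod.insert distrib_left exp_add mult_ac)
qed

lemma Q_integrand_nonneg: "Q_integrand s \<omega> \<ge> 0"
  unfolding Q_integrand_def
  by (intro mult_nonneg_nonneg prod_nonneg) (auto simp: less_imp_le sdf_num_pos sdf_den_pos)

lemma affine_mgf_F: "affine_mgf k s \<in> borel_measurable (F s)"
  unfolding affine_mgf_def by measurable

text \<open>Splitting the time-\<open>(s+1)\<close> exponent: the new variables \<open>RV\<^sub>s\<^sub>+\<^sub>1\<close>, \<open>\<epsilon>\<^sub>s\<^sub>+\<^sub>1\<close> enter through
  \<open>m RV + (z - \<nu>\<^sub>2) sqrt RV \<epsilon> + C\<^sub>1 \<ell>\<^sub>s\<^sub>+\<^sub>1\<close>; the rest (\<open>known_factor\<close>) is \<open>F\<^sub>s\<close>-measurable.\<close>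
definition "B_rest k s \<omega> = (\<Sum>i=1..p. (if i \<le> p - 1 then fst (snd (cf k)) (i + 1) else 0) * RV (s + 1 - int i) \<omega>)"
definition "C_rest k s \<omega> =
  (\<Sum>j=1..q. (if j \<le> q - 1 then snd (snd (cf k)) (j + 1) else 0) * lev \<gamma> eps RV (s + 1 - int j) \<omega>)"
definition "m_coef k = - \<nu>1 - \<nu>2 * lm + z * lm + fst (snd (cf k)) 1"
definition "known_factor k s \<omega> = exp ((z - \<nu>2) * r + fst (cf k) + B_rest k s \<omega> + C_rest k s \<omega>) / sdf_den s \<omega>"
definition "\<mu> k = m_coef k + C1 k * \<gamma>\<^sup>2 + ((z - \<nu>2) - 2 * C1 k * \<gamma>)\<^sup>2 / (2 * (1 - 2 * C1 k))"

lemma known_factor_F: "known_factor k s \<in> borel_measurable (F s)"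
proof -
  have [measurable]: "B_rest k s \<in> borel_measurable (F s)" "C_rest k s \<in> borel_measurable (F s)"
    unfolding B_rest_def C_rest_def by (rule lagged_RV_F lagged_lev_F)+
  show ?thesis using sdf_den_F[of s] unfolding known_factor_def by measurable
qed

lemma known_factor_nonneg: "known_factor k s \<omega> \<ge> 0"
  by (simp add: known_factor_def less_imp_le sdf_den_pos)

lemma one_period_split:
  "sdf_num s \<omega> / sdf_den s \<omega> * exp (z * logret r lm eps RV (s + 1) \<omega>) * affine_mgf k (s + 1) \<omega>
   = known_factor k s \<omega> * exp (m_coef k * RV (s + 1) \<omega> + (z - \<nu>2) * sqrt (RV (s + 1) \<omega>) * eps (s + 1) \<omega>
        + C1 k * (eps (s + 1) \<omega> - \<gamma> * sqrt (RV (s + 1) \<omega>))\<^sup>2)"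
proof -
  have B: "(\<Sum>i=1..p. fst (snd (cf k)) i * RV (s + 1 + 1 - int i) \<omega>)
      = fst (snd (cf k)) 1 * RV (s + 1) \<omega> + B_rest k s \<omega>"
    unfolding B_rest_def using sum_lag_shift[OF p_ge, of "fst (snd (cf k))" "\<lambda>u. RV u \<omega>" s] by simp
  have C: "(\<Sum>j=1..q. snd (snd (cf k)) j * lev \<gamma> eps RV (s + 1 + 1 - int j) \<omega>)
      = C1 k * lev \<gamma> eps RV (s + 1) \<omega> + C_rest k s \<omega>"
    unfolding C_rest_def C1_def
    using sum_lag_shift[OF q_ge, of "snd (snd (cf k))" "\<lambda>u. lev \<gamma> eps RV u \<omega>" s] by simp
  have "(- \<nu>1 * RV (s + 1) \<omega> - \<nu>2 * logret r lm eps RV (s + 1) \<omega>) + z * logret r lm eps RV (s + 1) \<omega>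
        + (fst (cf k) + (fst (snd (cf k)) 1 * RV (s + 1) \<omega> + B_rest k s \<omega>)
        + (C1 k * lev \<gamma> eps RV (s + 1) \<omega> + C_rest k s \<omega>))
      = ((z - \<nu>2) * r + fst (cf k) + B_rest k s \<omega> + C_rest k s \<omega>)
        + (m_coef k * RV (s + 1) \<omega> + (z - \<nu>2) * sqrt (RV (s + 1) \<omega>) * eps (s + 1) \<omega>
        + C1 k * (eps (s + 1) \<omega> - \<gamma> * sqrt (RV (s + 1) \<omega>))\<^sup>2)"
    unfolding logret_def lev_def m_coef_def by (simp add: algebra_simps)
  thus ?thesis
    unfolding known_factor_def sdf_num_def affine_mgf_def B C
    by (simp add: exp_add[symmetric] add_ac del: exp_add)
qed

text \<open>After integrating out period \<open>s + 1\<close>, the one-period exponent is \<open>Y\<^sup>* + X\<close> and the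
  starred recursion reproduces the time-\<open>s\<close> coefficients.\<close>
lemma \<mu>_eq: "1 - 2 * C1 k > 0 \<Longrightarrow> \<mu> k = Ys + Xc k"
  unfolding \<mu>_def m_coef_def \<nu>2_def Ys_def cf_Suc(4) C1_def
  by (rule starred_exponent[unfolded C1_def]) simp

lemma one_period_recursion:
  assumes C: "1 - 2 * C1 k > 0" and X: "\<theta>s * Xc k < 1"
  shows "known_factor k s \<omega> * (exp (- \<delta> * wfun (\<mu> k) \<theta> + Th s \<omega> * vfun (\<mu> k) \<theta>) / sqrt (1 - 2 * C1 k))
       = affine_mgf (Suc k) s \<omega>"
proof -
  note shift = wfun_vfun_shift[OF L_def L_pos \<theta>s_def X]
  define wX where "wX = wfun (Xc k) \<theta>s"
  define vX where "vX = vfun (Xc k) \<theta>s"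
  define SB where "SB = (\<Sum>i=1..p. \<beta> i * RV (s + 1 - int i) \<omega>)"
  define SA where "SA = (\<Sum>j=1..q. \<alpha> j * lev \<gamma> eps RV (s + 1 - int j) \<omega>)"
  have Th: "Th s \<omega> = d + SB + SA" unfolding Theta_def SB_def SA_def ..
  have w: "wfun (\<mu> k) \<theta> = wfun Ys \<theta> + wX" unfolding \<mu>_eq[OF C] wX_def by (rule shift(1))
  have v: "vfun (\<mu> k) \<theta> = vfun Ys \<theta> + vX / L" unfolding \<mu>_eq[OF C] vX_def by (rule shift(2))
  have sq: "sqrt (1 - 2 * C1 k) = exp (ln (1 - 2 * C1 k) / 2)"
    using C by (simp add: powr_half_sqrt[symmetric] powr_def)
  have lin: "(\<Sum>i\<in>I. (h i + v * (b i / L)) * x i) = (\<Sum>i\<in>I. h i * x i) + (v / L) * (\<Sum>i\<in>I. b i * x i)"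
    for I and h b x :: "nat \<Rightarrow> real" and v
    by (simp add: sum.distrib sum_distrib_left algebra_simps)
  have new: "affine_mgf (Suc k) s \<omega> = exp (fst (cf k) + z * r - ln (1 - 2 * C1 k) / 2 - \<delta> * wX + d / L * vX
       + (B_rest k s \<omega> + (vX / L) * SB) + (C_rest k s \<omega> + (vX / L) * SA))"
    unfolding affine_mgf_def cf_Suc(1,2,3) lin B_rest_def C_rest_def SB_def SA_def wX_def vX_def ..
  have exponent: "((z - \<nu>2) * r + fst (cf k) + B_rest k s \<omega> + C_rest k s \<omega>)
        - (- \<nu>2 * r - \<delta> * wfun Ys \<theta> + (d + SB + SA) * vfun Ys \<theta>)
        + (- \<delta> * (wfun Ys \<theta> + wX) + (d + SB + SA) * (vfun Ys \<theta> + vX / L)) - ln (1 - 2 * C1 k) / 2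
      = fst (cf k) + z * r - ln (1 - 2 * C1 k) / 2 - \<delta> * wX + d / L * vX
       + (B_rest k s \<omega> + (vX / L) * SB) + (C_rest k s \<omega> + (vX / L) * SA)"
    by (simp add: algebra_simps add_divide_distrib)
  show ?thesis
    unfolding known_factor_def sdf_den_def Th w v sq new exponent[symmetric]
    by (simp add: exp_diff exp_add mult_ac)
qed


lemma one_period_affine:
  assumes s: "s \<ge> t0" and C: "1 - 2 * C1 k > 0" and X: "\<theta>s * Xc k < 1"
    and g[measurable]: "g \<in> borel_measurable (F s)"
  shows "(\<integral>\<^sup>+ \<omega>. g \<omega> * ennreal (sdf_num s \<omega> / sdf_den s \<omega> * exp (z * logret r lm eps RV (s + 1) \<omega>)
                               * affine_mgf k (s + 1) \<omega>) \<partial>M)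
       = (\<integral>\<^sup>+ \<omega>. g \<omega> * ennreal (affine_mgf (Suc k) s \<omega>) \<partial>M)"
proof -
  have gK[measurable]: "(\<lambda>\<omega>. g \<omega> * ennreal (known_factor k s \<omega>)) \<in> borel_measurable (F s)"
    using known_factor_F[of k s] by measurable
  have \<mu>_ok: "\<theta> * \<mu> k < 1"
  proof -
    have "\<theta> * Xc k < L" using X L_pos by (simp add: \<theta>s_def field_simps)
    thus ?thesis using \<mu>_eq[OF C] unfolding L_def by (simp add: algebra_simps)
  qed
  have "(\<integral>\<^sup>+ \<omega>. g \<omega> * ennreal (sdf_num s \<omega> / sdf_den s \<omega> * exp (z * logret r lm eps RV (s + 1) \<omega>)
                               * affine_mgf k (s + 1) \<omega>) \<partial>M)
      = (\<integral>\<^sup>+ \<omega>. (g \<omega> * ennreal (known_factor k s \<omega>)) * ennreal (exp (m_coef k * RV (s + 1) \<omega>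
           + (z - \<nu>2) * sqrt (RV (s + 1) \<omega>) * eps (s + 1) \<omega>
           + C1 k * (eps (s + 1) \<omega> - \<gamma> * sqrt (RV (s + 1) \<omega>))\<^sup>2)) \<partial>M)"
    unfolding one_period_split
    by (intro nn_integral_cong) (simp add: ennreal_mult known_factor_nonneg mult.assoc)
  also have "\<dots> = (\<integral>\<^sup>+ \<omega>. (g \<omega> * ennreal (known_factor k s \<omega>))
           * ennreal (exp (- \<delta> * wfun (\<mu> k) \<theta> + Th s \<omega> * vfun (\<mu> k) \<theta>) / sqrt (1 - 2 * C1 k)) \<partial>M)"
    by (rule one_period[OF s _ _ gK, where c="C1 k" and b=\<gamma> and m="m_coef k" and a="z - \<nu>2",
          folded \<mu>_def]) (use C \<mu>_ok in simp_all)
  also have "\<dots> = (\<integral>\<^sup>+ \<omega>. g \<omega> * ennreal (affine_mgf (Suc k) s \<omega>) \<partial>M)"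
  proof -
    have "ennreal (known_factor k s \<omega>)
          * ennreal (exp (- \<delta> * wfun (\<mu> k) \<theta> + Th s \<omega> * vfun (\<mu> k) \<theta>) / sqrt (1 - 2 * C1 k))
        = ennreal (affine_mgf (Suc k) s \<omega>)" for \<omega>
      unfolding one_period_recursion[OF C X, symmetric]
      by (rule ennreal_mult[symmetric]) (use C in \<open>auto simp: known_factor_nonneg\<close>)
    thus ?thesis by (simp only: mult.assoc)
  qed
  finally show ?thesis .
qed

lemma Q_integrand_integral:
  assumes "T - int k \<ge> t0" "\<forall>j<k. 1 - 2 * C1 j > 0 \<and> \<theta>s * Xc j < 1"
    and "g \<in> borel_measurable (F (T - int k))"
  shows "(\<integral>\<^sup>+ \<omega>. g \<omega> * ennreal (Q_integrand (T - int k) \<omega>) \<partial>M)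
       = (\<integral>\<^sup>+ \<omega>. g \<omega> * ennreal (affine_mgf k (T - int k) \<omega>) \<partial>M)"
  using assms
proof (induction k arbitrary: g)
  case 0
  have "Q_integrand T \<omega> = 1" "affine_mgf 0 T \<omega> = 1" for \<omega>
    by (simp_all add: Q_integrand_def logret_sum_def affine_mgf_def cf_0)
  thus ?case by simp
next
  case (Suc k g)
  define s where "s = T - int (Suc k)"
  have s1: "s + 1 = T - int k" by (simp add: s_def)
  have s: "t0 \<le> s" "s < T" using Suc.prems(1) by (simp_all add: s_def)
  have C: "1 - 2 * C1 k > 0" and X: "\<theta>s * Xc k < 1" using Suc.prems(2) by auto
  have g[measurable]: "g \<in> borel_measurable (F s)" using Suc.prems(3) by (simp add: s_def)
  define \<rho> where "\<rho> = (\<lambda>\<omega>. sdf_num s \<omega> / sdf_den s \<omega> * exp (z * logret r lm eps RV (s + 1) \<omega>))"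
  have \<rho>_nonneg: "\<rho> \<omega> \<ge> 0" for \<omega>
    by (simp add: \<rho>_def less_imp_le sdf_num_pos sdf_den_pos)
  have g\<rho>: "(\<lambda>\<omega>. g \<omega> * ennreal (\<rho> \<omega>)) \<in> borel_measurable (F (s + 1))"
    using measurable_F_mono[OF g, of "s + 1"] sdf_num_F[of s] measurable_F_mono[OF sdf_den_F[of s], of "s + 1"]
      RV_F[of "s + 1" "s + 1"] eps_F[of "s + 1" "s + 1"]
    unfolding \<rho>_def logret_def by measurable
  have "ennreal (Q_integrand s \<omega>) = ennreal (\<rho> \<omega>) * ennreal (Q_integrand (s + 1) \<omega>)" for \<omega>
    unfolding Q_integrand_step[OF s(2)] \<rho>_def by (rule ennreal_mult) (use \<rho>_nonneg Q_integrand_nonneg in \<open>auto simp: \<rho>_def\<close>)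
  hence "(\<integral>\<^sup>+ \<omega>. g \<omega> * ennreal (Q_integrand s \<omega>) \<partial>M)
      = (\<integral>\<^sup>+ \<omega>. (g \<omega> * ennreal (\<rho> \<omega>)) * ennreal (Q_integrand (s + 1) \<omega>) \<partial>M)"
    by (simp add: mult.assoc)
  also have "\<dots> = (\<integral>\<^sup>+ \<omega>. (g \<omega> * ennreal (\<rho> \<omega>)) * ennreal (affine_mgf k (s + 1) \<omega>) \<partial>M)"
    using Suc.IH[of "\<lambda>\<omega>. g \<omega> * ennreal (\<rho> \<omega>)"] Suc.prems(2) g\<rho> s(1) unfolding s1
    by (simp add: s1[symmetric])
  also have "\<dots> = (\<integral>\<^sup>+ \<omega>. g \<omega> * ennreal (\<rho> \<omega> * affine_mgf k (s + 1) \<omega>) \<partial>M)"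
    by (simp add: ennreal_mult \<rho>_nonneg mult.assoc affine_mgf_def)
  also have "\<dots> = (\<integral>\<^sup>+ \<omega>. g \<omega> * ennreal (affine_mgf (Suc k) s \<omega>) \<partial>M)"
    unfolding \<rho>_def by (rule one_period_affine[OF s(1) C X g])
  finally show ?case by (simp add: s_def)
qed

lemma Q_cond_exp_affine:
  assumes t: "t0 \<le> t" "t \<le> T" and ok: "\<forall>k<nat (T - t). 1 - 2 * C1 k > 0 \<and> \<theta>s * Xc k < 1"
  shows "AE \<omega> in M. Q_cond_exp M r lm \<nu>1 \<nu>2 eps RV t T (\<lambda>\<omega>. exp (z * logret_sum r lm eps RV t T \<omega>)) \<omega>
                   = affine_mgf (nat (T - t)) t \<omega>"
proof -
  define k where "k = nat (T - t)"
  have tk: "T - int k = t" using t by (simp add: k_def)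
  have sdf: "sdf M r lm \<nu>1 \<nu>2 eps RV s \<omega> = sdf_num s \<omega> / real_cond_exp M (F s) (sdf_num s) \<omega>" for s \<omega>
  proof -
    have "(\<lambda>\<omega>'. exp (- \<nu>1 * RV (s + 1) \<omega>' - \<nu>2 * logret r lm eps RV (s + 1) \<omega>')) = sdf_num s"
      by (simp add: sdf_num_def fun_eq_iff)
    thus ?thesis unfolding sdf_def by (simp add: sdf_num_def)
  qed
  define X where "X = (\<lambda>\<omega>. (\<Prod>s\<in>{t..<T}. sdf M r lm \<nu>1 \<nu>2 eps RV s \<omega>) * exp (z * logret_sum r lm eps RV t T \<omega>))"
  have "AE \<omega> in M. \<forall>s\<in>{t..<T}. real_cond_exp M (F s) (sdf_num s) \<omega> = sdf_den s \<omega>"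
    using t by (subst AE_finite_all) (auto intro!: sdf_cond_exp)
  hence XQ: "AE \<omega> in M. X \<omega> = Q_integrand t \<omega>"
    by eventually_elim (simp add: X_def Q_integrand_def sdf)
  have "AE \<omega> in M. real_cond_exp M (F t) X \<omega> = affine_mgf k t \<omega>"
  proof (rule real_cond_exp_charact_nn[OF F_sigma_finite])
    show "X \<in> borel_measurable M" unfolding X_def sdf_def logret_sum_def logret_def by measurable
    show "AE \<omega> in M. 0 \<le> X \<omega>" using XQ by eventually_elim (simp add: Q_integrand_nonneg)
    show "affine_mgf k t \<in> borel_measurable (F t)" by (rule affine_mgf_F)
    show "0 \<le> affine_mgf k t \<omega>" for \<omega> by (simp add: affine_mgf_def)
    fix A assume A: "A \<in> sets (F t)"
    have "(\<integral>\<^sup>+ \<omega>. indicator A \<omega> * ennreal (X \<omega>) \<partial>M) = (\<integral>\<^sup>+ \<omega>. indicator A \<omega> * ennreal (Q_integrand t \<omega>) \<partial>M)"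
      using XQ by (intro nn_integral_cong_AE) auto
    also have "\<dots> = (\<integral>\<^sup>+ \<omega>. indicator A \<omega> * ennreal (affine_mgf k t \<omega>) \<partial>M)"
      using Q_integrand_integral[of k "indicator A"] tk t ok A by (simp add: k_def)
    finally show "(\<integral>\<^sup>+ \<omega>. indicator A \<omega> * ennreal (X \<omega>) \<partial>M)
        = (\<integral>\<^sup>+ \<omega>. indicator A \<omega> * ennreal (affine_mgf k t \<omega>) \<partial>M)" .
  qed
  thus ?thesis unfolding Q_cond_exp_def X_def k_def .
qed

end

theorem corollary3:
  fixes M :: "'a measure" and eps RV :: "int \<Rightarrow> 'a \<Rightarrow> real"
    and r lm \<delta> \<theta> d \<gamma> \<nu>1 \<nu>2 z :: real and p q :: nat and \<beta> \<alpha> :: "nat \<Rightarrow> real"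
    and t0 t T :: int
  assumes P: "prob_space M"
    and eps_dist: "\<forall>u. distributed M lborel (eps u) std_normal_density"
    and eps_iid: "prob_space.indep_vars M (\<lambda>_. borel) eps UNIV"
    and RV_meas: "\<forall>u. RV u \<in> borel_measurable M"
    and RV_pos: "\<forall>u. \<forall>\<omega>\<in>space M. RV u \<omega> > 0"
    and \<delta>_pos: "\<delta> > 0" and \<theta>_pos: "\<theta> > 0" and d_nonneg: "d \<ge> 0"
    and p_ge: "p \<ge> 1" and q_ge: "q \<ge> 1"
    and \<beta>_nonneg: "\<forall>i. \<beta> i \<ge> 0" and \<alpha>_nonneg: "\<forall>j. \<alpha> j \<ge> 0"
    and eps_indep_past: "\<forall>s\<ge>t0. prob_space.indep_set M
            {eps (s + 1) -` B \<inter> space M | B. B \<in> sets borel} (sets (filt_plus M eps RV s))"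
    and RV_cond_law: "\<forall>s\<ge>t0. \<forall>A\<in>sets (filt M eps RV s). \<forall>B\<in>sets (borel :: real measure).
            measure M (A \<inter> (RV (s + 1) -` B \<inter> space M)) =
            (\<integral>\<omega>. indicator A \<omega> * ncgamma_prob \<delta> (Theta d p q \<beta> \<alpha> \<gamma> eps RV s \<omega>) \<theta> B \<partial>M)"
    and \<nu>2_eq: "\<nu>2 = lm + 1/2"
  defines "Ys \<equiv> - lm\<^sup>2 / 2 - \<nu>1 + 1/8"
  assumes Ys_cond: "1 - \<theta> * Ys > 0"
  defines "\<beta>s \<equiv> (\<lambda>i. \<beta> i / (1 - \<theta> * Ys))"
    and "\<alpha>s \<equiv> (\<lambda>j. \<alpha> j / (1 - \<theta> * Ys))"
    and "\<theta>s \<equiv> \<theta> / (1 - \<theta> * Ys)"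
    and "ds \<equiv> d / (1 - \<theta> * Ys)"
    and "\<delta>s \<equiv> \<delta>"
    and "\<gamma>s \<equiv> \<gamma> + lm + 1/2"
    and "lms \<equiv> - (1/2 :: real)"
    and "epss \<equiv> (\<lambda>u \<omega>. eps u \<omega> + (lm + 1/2) * sqrt (RV u \<omega>))"
  assumes t_ge: "t0 \<le> t" and tT: "t \<le> T"
    and recursion_ok: "\<forall>k < nat (T - t).
            1 - 2 * snd (snd (coef r lms \<delta>s \<theta>s ds \<gamma>s p q \<beta>s \<alpha>s z k)) 1 > 0 \<and>
            \<theta>s * Xcoef r lms \<delta>s \<theta>s ds \<gamma>s p q \<beta>s \<alpha>s z k < 1"
  shows "AE \<omega> in M.
     Q_cond_exp M r lm \<nu>1 \<nu>2 eps RV t T (\<lambda>\<omega>. exp (z * logret_sum r lm eps RV t T \<omega>)) \<omega> =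
     exp (fst (coef r lms \<delta>s \<theta>s ds \<gamma>s p q \<beta>s \<alpha>s z (nat (T - t)))
          + (\<Sum>i=1..p. fst (snd (coef r lms \<delta>s \<theta>s ds \<gamma>s p q \<beta>s \<alpha>s z (nat (T - t)))) i
                        * RV (t + 1 - int i) \<omega>)
          + (\<Sum>j=1..q. snd (snd (coef r lms \<delta>s \<theta>s ds \<gamma>s p q \<beta>s \<alpha>s z (nat (T - t)))) j
                        * lev \<gamma>s epss RV (t + 1 - int j) \<omega>))"
proof -
  interpret LM: lharg_main M eps RV \<delta> \<theta> d \<gamma> p q \<beta> \<alpha> t0 r lm \<nu>1 z T
    by (intro lharg_main.intro lharg.intro lharg_main_axioms.intro)
       (use assms Ys_cond in \<open>simp_all add: \<open>Ys \<equiv> - lm\<^sup>2 / 2 - \<nu>1 + 1/8\<close>\<close>)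
  have Ys_eq: "LM.Ys = Ys" by (simp add: LM.Ys_def \<open>Ys \<equiv> - lm\<^sup>2 / 2 - \<nu>1 + 1/8\<close>)
  have coef_eq: "coef r lms \<delta>s \<theta>s ds \<gamma>s p q \<beta>s \<alpha>s z = LM.cf"
    and Xcoef_eq: "Xcoef r lms \<delta>s \<theta>s ds \<gamma>s p q \<beta>s \<alpha>s z = LM.Xc"
    and \<theta>s_eq: "\<theta>s = LM.\<theta>s"
    by (simp_all add: fun_eq_iff LM.cf_def LM.Xc_def LM.\<theta>s_def LM.L_def Ys_eq
        \<open>\<beta>s \<equiv> (\<lambda>i. \<beta> i / (1 - \<theta> * Ys))\<close> \<open>\<alpha>s \<equiv> (\<lambda>j. \<alpha> j / (1 - \<theta> * Ys))\<close>
        \<open>\<theta>s \<equiv> \<theta> / (1 - \<theta> * Ys)\<close> \<open>ds \<equiv> d / (1 - \<theta> * Ys)\<close> \<open>\<delta>s \<equiv> \<delta>\<close>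
        \<open>\<gamma>s \<equiv> \<gamma> + lm + 1/2\<close> \<open>lms \<equiv> - (1/2 :: real)\<close>)
  have lev_eq: "lev \<gamma>s epss RV = lev \<gamma> eps RV"
    by (simp add: fun_eq_iff lev_def \<open>\<gamma>s \<equiv> \<gamma> + lm + 1/2\<close>
        \<open>epss \<equiv> (\<lambda>u \<omega>. eps u \<omega> + (lm + 1/2) * sqrt (RV u \<omega>))\<close> algebra_simps)
  have "\<forall>k<nat (T - t). 1 - 2 * LM.C1 k > 0 \<and> LM.\<theta>s * LM.Xc k < 1"
    using recursion_ok[unfolded coef_eq Xcoef_eq, unfolded \<theta>s_eq] unfolding LM.C1_def .
  from LM.Q_cond_exp_affine[OF t_ge tT this]
  show ?thesis unfolding LM.affine_mgf_def LM.\<nu>2_def \<nu>2_eq coef_eq lev_eq .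
qed

end
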